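(* Let $0<d<1/2$, let $q$ be a positive integer with $q<1/(1-2d)$, and let $K\ge0$ be an integer. For every $\theta\in\mathcal S^{(K)}_{q,d}$, $$\int_{\mathbb R^q}\frac{|\hat\theta(u_1+\cdots+u_q)|^2}{|u_1+\cdots+u_q|^{2K}|u_1\cdots u_q|^{2d}}\,du_1\cdots du_q<\infty,$$ so that $Z^{(K)}_{q,d}(\theta)$ is well defined. Moreover, under the filter assumptions below, if $K\in\{0,\dots,M\}$ then $h_{\infty,m,k}\in\mathcal S^{(K)}_{q,d}$ for all $m,k\in\mathbb Z$, so $Z^{(K)}_{q,d}(h_{\infty,m,k})$ is well defined.
   Context: For $\theta\in L^2(\mathbb R)$ (complex valued), $\hat\theta(\xi)=\int_{\mathbb R}\theta(t)e^{-\mathrm i t\xi}dt$ (extended to $L^2$). $\mathcal S^{(K)}_{q,d}=\{\theta:\int_{\mathbb R}|\hat\theta(\xi)|^2|\xi|^{q-1-2dq-2K}d\xi<\infty\}$. $\widehat W$ is a complex Gaussian random measure on $\mathbb R$ with $\mathbb E\widehat W(A)=0$, $\mathbb E[\widehat W(A)\overline{\widehat W(B)}]=|A\cap B|$, additive on disjoint sets, $\widehat W(A)=\overline{\widehat W(-A)}$, and $\int''$ denotes the multiple Wiener–Itô integral with respect to $\widehat W$ (hyperdiagonals excluded), defined for $L^2(\mathbb R^q)$ integrands. The generalized process is $$Z^{(K)}_{q,d}(\theta)=\int''_{\mathbb R^q}\frac{\overline{\hat\theta(u_1+\cdots+u_q)}}{(\mathrm i(u_1+\cdots+u_q))^K|u_1\cdots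 u_q|^d}\,d\widehat W(u_1)\cdots d\widehat W(u_q).$$ Filter assumptions: $M\ge K$ is an integer, $\alpha>1/2$, $C>0$, and $\hat h_\infty:\mathbb R\to\mathbb C$ satisfies $|\hat h_\infty(\lambda)|\le C|\lambda|^M(1+|\lambda|)^{-\alpha-M}$ for all $\lambda\in\mathbb R$; $h_\infty\in L^2(\mathbb R)$ is the function whose Fourier transform is $\hat h_\infty$. For $\bar\gamma_m>0$ ($m\in\mathbb Z$) and $k\in\mathbb Z$, $h_{\infty,m,k}(t)=\bar\gamma_m^{-1/2}h_\infty(-\bar\gamma_m^{-1}t+k)$. *)

theory Defs
  imports "HOL-Analysis.Analysis"
begin

definition L2_fun :: "(real \<Rightarrow> complex) \<Rightarrow> bool" where
  "L2_fun f \<longleftrightarrow> f \<in> borel_measurable lborel \<and> integrable lborel (\<lambda>t. (cmod (f t))\<^sup>2)"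

definition trunc_fourier :: "(real \<Rightarrow> complex) \<Rightarrow> real \<Rightarrow> real \<Rightarrow> complex" where
  "trunc_fourier \<theta> R \<xi> = (LBINT t=-R..R. \<theta> t * exp (- \<i> * complex_of_real (t * \<xi>)))"

text \<open>g is (a representative of) the L2 (Plancherel) Fourier transform of theta:
  the L2 limit of the truncated Fourier integrals.\<close>
definition fourier_L2 :: "(real \<Rightarrow> complex) \<Rightarrow> (real \<Rightarrow> complex) \<Rightarrow> bool" where
  "fourier_L2 \<theta> g \<longleftrightarrow> L2_fun \<theta> \<and> L2_fun g \<and>
     ((\<lambda>R. \<integral>\<^sup>+ \<xi>. ennreal ((cmod (g \<xi> - trunc_fourier \<theta> R \<xi>))\<^sup>2) \<partial>lborel)
        \<longlongrightarrow> 0) at_top"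

definition S_class :: "nat \<Rightarrow> nat \<Rightarrow> real \<Rightarrow> (real \<Rightarrow> complex) \<Rightarrow> bool" where
  "S_class K q d \<theta> \<longleftrightarrow> L2_fun \<theta> \<and> (\<exists>g. fourier_L2 \<theta> g \<and>
     (\<integral>\<^sup>+ \<xi>. ennreal ((cmod (g \<xi>))\<^sup>2 * \<bar>\<xi>\<bar> powr (real q - 1 - 2 * d * real q - 2 * real K)) \<partial>lborel) < \<infinity>)"

definition qfold_integral :: "nat \<Rightarrow> nat \<Rightarrow> real \<Rightarrow> (real \<Rightarrow> complex) \<Rightarrow> ennreal" where
  "qfold_integral K q d g = (\<integral>\<^sup>+ u. ennreal ((cmod (g (\<Sum>i<q. u i)))\<^sup>2 /
        (\<bar>\<Sum>i<q. u i\<bar> ^ (2 * K) * \<bar>\<Prod>i<q. u i\<bar> powr (2 * d)))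
      \<partial>(PiM {..<q} (\<lambda>_. lborel)))"

definition h_mk :: "(real \<Rightarrow> complex) \<Rightarrow> (int \<Rightarrow> real) \<Rightarrow> int \<Rightarrow> int \<Rightarrow> real \<Rightarrow> complex" where
  "h_mk h \<gamma> m k t = complex_of_real (\<gamma> m powr (-1/2)) * h (- t / \<gamma> m + real_of_int k)"

end

theory Submission
  imports Defs "HOL-Probability.Probability"
begin

(* The integrand is F(u_1 + ... + u_q) times the
   product weight |u_1|^(-2d) ... |u_q|^(-2d) with F(\<xi>) = |g(\<xi>)|^2 / |\<xi>|^(2K).  Integrating out
   one variable at a time and rescaling, each step composes two power singularities into one
   (a Beta-type integral, finite because q(1 - 2d) < 1), so the q-fold integral is bounded by a
   constant times the one-dimensional integral of F against |\<xi>|^(q(1-2d)-1).  Since the L2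
   Fourier transform is unique up to null sets, this is the integral in the definition of
   S^(K)_(q,d).  The L2 transform of
   \<gamma>^(-1/2) h(-t/\<gamma> + k) is \<surd>\<gamma> e^(-i\<gamma>k\<xi>) hh(-\<gamma>\<xi>).  A change of variables turns its
   truncated Fourier integrals into Fourier integrals of h over windows centred at k, and a
   Plancherel inequality (proved via a Gaussian regularisation and Fatou's lemma) shows that
   these converge in L2 as well as the symmetric ones.  The weighted L2 norm scales by a power
   of \<gamma> and is finite by the decay bound on hh together with the hypotheses on q, d, K, M, \<alpha>. *)

lemma nn_integral_reflect_bound:
  fixes F :: "real \<Rightarrow> ennreal"
  assumes [measurable]: "F \<in> borel_measurable borel"
  shows "(\<integral>\<^sup>+x. F x \<partial>lborel)
    \<le> (\<integral>\<^sup>+x. indicator {0..} x * F x \<partial>lborel) + (\<integral>\<^sup>+x. indicator {0..} x * F (-x) \<partial>lborel)"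
proof -
  have "(\<integral>\<^sup>+x. F x \<partial>lborel) \<le> (\<integral>\<^sup>+x. indicator {0..} x * F x + indicator {0..} (-x) * F x \<partial>lborel)"
    by (intro nn_integral_mono) (auto simp: indicator_def)
  also have "\<dots> = (\<integral>\<^sup>+x. indicator {0..} x * F x \<partial>lborel) + (\<integral>\<^sup>+x. indicator {0..} (-x) * F x \<partial>lborel)"
    by (intro nn_integral_add) auto
  also have "(\<integral>\<^sup>+x. indicator {0..} (-x) * F x \<partial>lborel) = (\<integral>\<^sup>+x. indicator {0..} x * F (-x) \<partial>lborel)"
    by (subst nn_integral_real_affine[where c="-1" and t=0]) auto
  finally show ?thesis .
qed

lemma powr_integrable_near_zero:
  assumes "a > -1"
  shows "(\<integral>\<^sup>+x. indicator {-1..1} x * ennreal (\<bar>x\<bar> powr a) \<partial>lborel) < \<infinity>"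
proof -
  have half: "(\<integral>\<^sup>+x. ennreal (x powr a) * indicator {0..1} x \<partial>lborel) = ennreal (1 powr (a+1) / (a+1))"
    by (rule nn_integral_has_integral_lebesgue'[OF _ has_integral_powr_from_0]) (use assms in auto)
  have "(\<integral>\<^sup>+x. indicator {0..} x * (indicator {-1..1} (s * x) * ennreal (\<bar>x\<bar> powr a)) \<partial>lborel)
      = (\<integral>\<^sup>+x. ennreal (x powr a) * indicator {0..1} x \<partial>lborel)" if "s = 1 \<or> s = -1" for s :: real
    using that by (intro nn_integral_cong) (auto simp: indicator_def)
  from this[of 1] this[of "-1"] show ?thesis
    by (intro le_less_trans[OF nn_integral_reflect_bound]) (auto simp: half)
qed

lemma powr_integrable_at_infinity:
  assumes "b < -1"
  shows "(\<integral>\<^sup>+x. indicator (- {-1<..<1}) x * ennreal (\<bar>x\<bar> powr b) \<partial>lborel) < \<infinity>"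
proof -
  have half: "(\<integral>\<^sup>+x. ennreal (x powr b) * indicator {1..} x \<partial>lborel) = ennreal (-(1 powr (b+1)) / (b+1))"
    by (rule nn_integral_has_integral_lebesgue'[OF _ has_integral_powr_to_inf]) (use assms in auto)
  have "(\<integral>\<^sup>+x. indicator {0..} x * (indicator (- {-1<..<1}) (s * x) * ennreal (\<bar>x\<bar> powr b)) \<partial>lborel)
      = (\<integral>\<^sup>+x. ennreal (x powr b) * indicator {1..} x \<partial>lborel)" if "s = 1 \<or> s = -1" for s :: real
    using that by (intro nn_integral_cong) (auto simp: indicator_def)
  from this[of 1] this[of "-1"] show ?thesis
    by (intro le_less_trans[OF nn_integral_reflect_bound]) (auto simp: half)
qed

lemma abs_powr_le_two_powr:
  fixes p x :: real
  assumes "p \<le> 0" and "1/2 \<le> \<bar>x\<bar>"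
  shows "\<bar>x\<bar> powr p \<le> 2 powr (-p)"
proof -
  have "\<bar>x\<bar> powr p \<le> (1/2) powr p" using assms by (intro powr_mono2') auto
  also have "(1/2) powr p = 2 powr (-p)" by (metis inverse_eq_divide inverse_powr powr_minus)
  finally show ?thesis .
qed

lemma beta_kernel_pointwise_bound:
  fixes a b t :: real
  assumes a: "a \<le> 0" and b: "b \<le> 0"
  defines "K \<equiv> 2 powr (-a) * 2 powr (-b)"
  shows "\<bar>1-t\<bar> powr b * \<bar>t\<bar> powr a \<le> K * (indicator {-1..1} t * \<bar>t\<bar> powr a
     + indicator {-1..1} (1-t) * \<bar>1-t\<bar> powr b + indicator {-2..2} t
     + indicator (- {-1<..<1}) t * \<bar>t\<bar> powr (a+b))"
    (is "_ \<le> K * (?near_zero + ?near_one + ?middle + ?far)")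
proof -
  have A1: "1 \<le> 2 powr (-a)" and B1: "1 \<le> 2 powr (-b)" using a b by (auto intro: ge_one_powr_ge_zero)
  have K1: "2 powr (-a) \<le> K" "2 powr (-b) \<le> K"
    unfolding K_def using A1 B1 by (auto intro: order_trans[OF _ mult_right_mono] order_trans[OF _ mult_left_mono])
  have terms: "0 \<le> ?near_zero" "0 \<le> ?near_one" "0 \<le> ?middle" "0 \<le> ?far"
    by (auto simp: indicator_def)
  consider (singular) "t = 0 \<or> t = 1" | (near_zero) "t \<noteq> 0" "\<bar>t\<bar> \<le> 1/2"
    | (near_one) "t \<noteq> 1" "\<bar>1-t\<bar> \<le> 1/2" | (far) "\<bar>t\<bar> \<ge> 2"
    | (middle) "\<bar>t\<bar> > 1/2" "\<bar>1-t\<bar> > 1/2" "\<bar>t\<bar> < 2" by linarith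
  then have "\<bar>1-t\<bar> powr b * \<bar>t\<bar> powr a \<le> K * ?near_zero \<or> \<bar>1-t\<bar> powr b * \<bar>t\<bar> powr a \<le> K * ?near_one
    \<or> \<bar>1-t\<bar> powr b * \<bar>t\<bar> powr a \<le> K * ?middle \<or> \<bar>1-t\<bar> powr b * \<bar>t\<bar> powr a \<le> K * ?far"
  proof cases
    case singular then show ?thesis using terms K1 A1 by auto
  next
    case near_zero
    have "\<bar>1-t\<bar> powr b * \<bar>t\<bar> powr a \<le> 2 powr (-b) * \<bar>t\<bar> powr a"
      using near_zero b by (intro mult_right_mono abs_powr_le_two_powr) auto
    also have "\<dots> \<le> K * ?near_zero" using near_zero K1 by (auto simp: indicator_def mult_right_mono)
    finally show ?thesis by simp
  next
    case near_one
    have "\<bar>t\<bar> powr a \<le> 2 powr (-a)"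
      using near_one a by (intro abs_powr_le_two_powr) (auto simp: abs_if split: if_splits)
    then have "\<bar>1-t\<bar> powr b * \<bar>t\<bar> powr a \<le> 2 powr (-a) * \<bar>1-t\<bar> powr b"
      by (simp add: mult.commute mult_right_mono)
    also have "\<dots> \<le> K * ?near_one"
      using near_one K1 by (auto simp: indicator_def mult_right_mono abs_if split: if_splits)
    finally show ?thesis by simp
  next
    case far
    have "\<bar>1-t\<bar> powr b \<le> (\<bar>t\<bar>/2) powr b" using far b by (intro powr_mono2') (auto simp: abs_if split: if_splits)
    also have "\<dots> = 2 powr (-b) * \<bar>t\<bar> powr b" by (metis divide_inverse mult.commute powr_divide powr_minus)
    finally have "\<bar>1-t\<bar> powr b * \<bar>t\<bar> powr a \<le> 2 powr (-b) * \<bar>t\<bar> powr (a+b)"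
      by (simp add: powr_add mult_ac mult_left_mono)
    also have "\<dots> \<le> K * ?far" using far K1 by (auto simp: indicator_def mult_right_mono)
    finally show ?thesis by simp
  next
    case middle
    have "\<bar>1-t\<bar> powr b * \<bar>t\<bar> powr a \<le> 2 powr (-b) * 2 powr (-a)"
      using middle a b by (intro mult_mono abs_powr_le_two_powr) auto
    moreover have "?middle = 1" using middle by (auto simp: indicator_def abs_less_iff)
    ultimately have "\<bar>1-t\<bar> powr b * \<bar>t\<bar> powr a \<le> K * ?middle" unfolding K_def by (simp add: mult.commute)
    then show ?thesis by simp
  qed
  then show ?thesis using terms by (smt (verit) mult_left_mono order_trans K1 A1)
qed

lemma ennreal_plus4: "0\<le>x1 \<Longrightarrow> 0\<le>x2 \<Longrightarrow> 0\<le>x3 \<Longrightarrow> 0\<le>x4 \<Longrightarrow> ennreal (x1+x2+x3+x4) = (ennreal x1 + ennreal x2) + (ennreal x3 + ennreal x4)"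
  by (simp add: ennreal_plus[symmetric] add.assoc del: ennreal_plus)

lemma ennreal_indicator_mult: "ennreal (indicator A x * y) = indicator A x * ennreal y"
  by (auto simp: indicator_def)

lemma beta_kernel_finite:
  fixes a b :: real
  assumes a1: "-1 < a" and a0: "a \<le> 0" and b1: "-1 < b" and b0: "b \<le> 0" and ab: "a + b < -1"
  shows "(\<integral>\<^sup>+t. ennreal (\<bar>1-t\<bar> powr b * \<bar>t\<bar> powr a) \<partial>lborel) < \<infinity>"
proof -
  define K where "K = 2 powr (-a) * 2 powr (-b)"
  have "(\<integral>\<^sup>+t. ennreal (\<bar>1-t\<bar> powr b * \<bar>t\<bar> powr a) \<partial>lborel) \<le>
     (\<integral>\<^sup>+t. ennreal K * ((indicator {-1..1} t * ennreal (\<bar>t\<bar> powr a)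
     + indicator {-1..1} (1-t) * ennreal (\<bar>1-t\<bar> powr b)) + (indicator {-2..2} t
     + indicator (- {-1<..<1}) t * ennreal (\<bar>t\<bar> powr (a+b)))) \<partial>lborel)"
  proof (intro nn_integral_mono)
    fix t :: real
    have "ennreal (\<bar>1-t\<bar> powr b * \<bar>t\<bar> powr a) \<le> ennreal (K * (indicator {-1..1} t * \<bar>t\<bar> powr a
     + indicator {-1..1} (1-t) * \<bar>1-t\<bar> powr b + indicator {-2..2} t
     + indicator (- {-1<..<1}) t * \<bar>t\<bar> powr (a+b)))"
      unfolding K_def by (intro ennreal_leI beta_kernel_pointwise_bound a0 b0)
    also have "\<dots> = ennreal K * ((indicator {-1..1} t * ennreal (\<bar>t\<bar> powr a)
     + indicator {-1..1} (1-t) * ennreal (\<bar>1-t\<bar> powr b)) + (indicator {-2..2} t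
     + indicator (- {-1<..<1}) t * ennreal (\<bar>t\<bar> powr (a+b))))"
      unfolding K_def
      by (subst ennreal_mult, simp, simp, subst ennreal_plus4) (auto simp: ennreal_indicator_mult ennreal_indicator)
    finally show "ennreal (\<bar>1-t\<bar> powr b * \<bar>t\<bar> powr a) \<le> \<dots>" .
  qed
  also have "\<dots> = ennreal K * (((\<integral>\<^sup>+t. indicator {-1..1} t * ennreal (\<bar>t\<bar> powr a) \<partial>lborel)
     + (\<integral>\<^sup>+t. indicator {-1..1} (1-t) * ennreal (\<bar>1-t\<bar> powr b) \<partial>lborel)) + 
     ((\<integral>\<^sup>+t. indicator {-2..2::real} t \<partial>lborel)
     + (\<integral>\<^sup>+t. indicator (- {-1<..<1}) t * ennreal (\<bar>t\<bar> powr (a+b)) \<partial>lborel)))"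
    by (simp add: nn_integral_cmult nn_integral_add)
  also have "\<dots> < \<infinity>"
  proof -
    have p2: "(\<integral>\<^sup>+t. indicator {-1..1} (1-t) * ennreal (\<bar>1-t\<bar> powr b) \<partial>lborel) =
       (\<integral>\<^sup>+t. indicator {-1..1} t * ennreal (\<bar>t\<bar> powr b) \<partial>lborel)"
      by (subst (2) nn_integral_real_affine[where t=1 and c="-1"]) auto
    have p3: "(\<integral>\<^sup>+t. indicator {-2..2::real} t \<partial>lborel) = 4" by simp
    show ?thesis
      using powr_integrable_near_zero[OF a1] powr_integrable_near_zero[OF b1] powr_integrable_at_infinity[OF ab]
      by (simp add: p2 p3 ennreal_mult_less_top)
  qed
  finally show ?thesis .
qed

text \<open>Homogeneity of the kernel: substituting s = \<xi> t gives the factor |\<xi>|^(1+a+b).\<close>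
lemma beta_kernel_scaling:
  fixes a b \<xi> :: real
  assumes "\<xi> \<noteq> 0"
  shows "(\<integral>\<^sup>+s. ennreal (\<bar>\<xi> - s\<bar> powr b * \<bar>s\<bar> powr a) \<partial>lborel)
     = ennreal (\<bar>\<xi>\<bar> powr (1+a+b)) * (\<integral>\<^sup>+t. ennreal (\<bar>1-t\<bar> powr b * \<bar>t\<bar> powr a) \<partial>lborel)"
proof -
  have "(\<integral>\<^sup>+s. ennreal (\<bar>\<xi> - s\<bar> powr b * \<bar>s\<bar> powr a) \<partial>lborel)
     = \<bar>\<xi>\<bar> * (\<integral>\<^sup>+t. ennreal (\<bar>\<xi> - (0 + \<xi> * t)\<bar> powr b * \<bar>0 + \<xi> * t\<bar> powr a) \<partial>lborel)"
    by (rule nn_integral_real_affine) (use assms in auto)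
  also have "(\<lambda>t. ennreal (\<bar>\<xi> - (0 + \<xi> * t)\<bar> powr b * \<bar>0 + \<xi> * t\<bar> powr a)) =
      (\<lambda>t. ennreal (\<bar>\<xi>\<bar> powr (a+b)) * ennreal (\<bar>1-t\<bar> powr b * \<bar>t\<bar> powr a))"
  proof
    fix t
    have "\<xi> - (0 + \<xi> * t) = \<xi> * (1 - t)" by (simp add: algebra_simps)
    then show "ennreal (\<bar>\<xi> - (0 + \<xi> * t)\<bar> powr b * \<bar>0 + \<xi> * t\<bar> powr a) =
      ennreal (\<bar>\<xi>\<bar> powr (a+b)) * ennreal (\<bar>1-t\<bar> powr b * \<bar>t\<bar> powr a)"
      by (simp add: abs_mult powr_mult powr_add ennreal_mult'[symmetric] mult_ac)
  qed
  also have "ennreal \<bar>\<xi>\<bar> * (\<integral>\<^sup>+t. ennreal (\<bar>\<xi>\<bar> powr (a+b)) * ennreal (\<bar>1-t\<bar> powr b * \<bar>t\<bar> powr a) \<partial>lborel)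
     = ennreal (\<bar>\<xi>\<bar> * \<bar>\<xi>\<bar> powr (a+b)) * (\<integral>\<^sup>+t. ennreal (\<bar>1-t\<bar> powr b * \<bar>t\<bar> powr a) \<partial>lborel)"
    by (simp add: nn_integral_cmult ennreal_mult mult.assoc)
  also have "\<bar>\<xi>\<bar> * \<bar>\<xi>\<bar> powr (a+b) = \<bar>\<xi>\<bar> powr (1+a+b)"
    using assms by (simp add: powr_add)
  finally show ?thesis .
qed

definition riesz_integral :: "real \<Rightarrow> nat \<Rightarrow> (real \<Rightarrow> ennreal) \<Rightarrow> ennreal" where
  "riesz_integral b n F =
     (\<integral>\<^sup>+u. F (\<Sum>i<n. u i) * (\<Prod>i<n. ennreal (\<bar>u i\<bar> powr b)) \<partial>PiM {..<n} (\<lambda>_. lborel))"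

interpretation lborel_product: product_sigma_finite "\<lambda>_::nat. lborel :: real measure"
  by (simp add: product_sigma_finite_def lborel.sigma_finite_measure_axioms)

lemma riesz_integral_one:
  assumes [measurable]: "F \<in> borel_measurable borel"
  shows "riesz_integral b (Suc 0) F = (\<integral>\<^sup>+x. F x * ennreal (\<bar>x\<bar> powr b) \<partial>lborel)"
proof -
  have "riesz_integral b (Suc 0) F = (\<integral>\<^sup>+u. F (u 0) * ennreal (\<bar>u 0\<bar> powr b) \<partial>PiM {0::nat} (\<lambda>_. lborel))"
    unfolding riesz_integral_def by (simp add: lessThan_Suc)
  also have "\<dots> = (\<integral>\<^sup>+x. F x * ennreal (\<bar>x\<bar> powr b) \<partial>lborel)"
    by (rule lborel_product.product_nn_integral_singleton) measurable
  finally show ?thesis .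
qed

lemma riesz_integral_Suc:
  assumes F[measurable]: "F \<in> borel_measurable borel"
  shows "riesz_integral b (Suc n) F
    = riesz_integral b n (\<lambda>s. \<integral>\<^sup>+y. F (s + y) * ennreal (\<bar>y\<bar> powr b) \<partial>lborel)"
proof -
  define G where "G = (\<lambda>s. \<integral>\<^sup>+y. F (s + y) * ennreal (\<bar>y\<bar> powr b) \<partial>lborel)"
  have ins: "{..<Suc n} = insert n {..<n}" by auto
  have "riesz_integral b (Suc n) F
     = (\<integral>\<^sup>+x. \<integral>\<^sup>+y. F (\<Sum>i<Suc n. (x(n:=y)) i) * (\<Prod>i<Suc n. ennreal (\<bar>(x(n:=y)) i\<bar> powr b))
          \<partial>lborel \<partial>PiM {..<n} (\<lambda>_. lborel))"
    unfolding riesz_integral_def ins by (rule lborel_product.product_nn_integral_insert) auto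
  also have "\<dots> = (\<integral>\<^sup>+x. G (\<Sum>i<n. x i) * (\<Prod>i<n. ennreal (\<bar>x i\<bar> powr b)) \<partial>PiM {..<n} (\<lambda>_. lborel))"
  proof (intro nn_integral_cong)
    fix x :: "nat \<Rightarrow> real"
    have s: "(\<Sum>i<n. (x(n:=y)) i) = (\<Sum>i<n. x i)" for y by (intro sum.cong) auto
    have p: "(\<Prod>i<n. ennreal (\<bar>(x(n:=y)) i\<bar> powr b)) = (\<Prod>i<n. ennreal (\<bar>x i\<bar> powr b))" for y
      by (intro prod.cong) auto
    have "(\<integral>\<^sup>+y. F (\<Sum>i<Suc n. (x(n:=y)) i) * (\<Prod>i<Suc n. ennreal (\<bar>(x(n:=y)) i\<bar> powr b)) \<partial>lborel)
       = (\<integral>\<^sup>+y. F ((\<Sum>i<n. x i) + y) * ennreal (\<bar>y\<bar> powr b) * (\<Prod>i<n. ennreal (\<bar>x i\<bar> powr b)) \<partial>lborel)"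
      by (intro nn_integral_cong) (simp add: s p mult_ac)
    also have "\<dots> = G (\<Sum>i<n. x i) * (\<Prod>i<n. ennreal (\<bar>x i\<bar> powr b))"
      unfolding G_def by (rule nn_integral_multc) measurable
    finally show "(\<integral>\<^sup>+y. F (\<Sum>i<Suc n. (x(n:=y)) i) * (\<Prod>i<Suc n. ennreal (\<bar>(x(n:=y)) i\<bar> powr b)) \<partial>lborel)
       = G (\<Sum>i<n. x i) * (\<Prod>i<n. ennreal (\<bar>x i\<bar> powr b))" .
  qed
  finally show ?thesis unfolding G_def riesz_integral_def .
qed

lemma riesz_composition:
  assumes F[measurable]: "F \<in> borel_measurable borel"
  shows "(\<integral>\<^sup>+s. (\<integral>\<^sup>+y. F (s + y) * ennreal (\<bar>y\<bar> powr b) \<partial>lborel) * ennreal (\<bar>s\<bar> powr a) \<partial>lborel)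
    = (\<integral>\<^sup>+t. ennreal (\<bar>1-t\<bar> powr b * \<bar>t\<bar> powr a) \<partial>lborel)
      * (\<integral>\<^sup>+\<xi>. F \<xi> * ennreal (\<bar>\<xi>\<bar> powr (1 + a + b)) \<partial>lborel)"
proof -
  define B where "B = (\<integral>\<^sup>+t. ennreal (\<bar>1-t\<bar> powr b * \<bar>t\<bar> powr a) \<partial>lborel)"
  have "(\<integral>\<^sup>+s. (\<integral>\<^sup>+y. F (s + y) * ennreal (\<bar>y\<bar> powr b) \<partial>lborel) * ennreal (\<bar>s\<bar> powr a) \<partial>lborel)
      = (\<integral>\<^sup>+s. \<integral>\<^sup>+\<xi>. F \<xi> * ennreal (\<bar>\<xi> - s\<bar> powr b) * ennreal (\<bar>s\<bar> powr a) \<partial>lborel \<partial>lborel)"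
  proof (intro nn_integral_cong)
    fix s :: real
    have "(\<integral>\<^sup>+y. F (s + y) * ennreal (\<bar>y\<bar> powr b) \<partial>lborel) * ennreal (\<bar>s\<bar> powr a)
        = (\<integral>\<^sup>+y. F (s + y) * ennreal (\<bar>y\<bar> powr b) * ennreal (\<bar>s\<bar> powr a) \<partial>lborel)"
      by (rule nn_integral_multc[symmetric]) measurable
    also have "\<dots> = (\<integral>\<^sup>+\<xi>. F \<xi> * ennreal (\<bar>\<xi> - s\<bar> powr b) * ennreal (\<bar>s\<bar> powr a) \<partial>lborel)"
      by (subst (2) nn_integral_real_affine[where t=s and c=1]) auto
    finally show "(\<integral>\<^sup>+y. F (s + y) * ennreal (\<bar>y\<bar> powr b) \<partial>lborel) * ennreal (\<bar>s\<bar> powr a) = \<dots>" .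
  qed
  also have "\<dots> = (\<integral>\<^sup>+\<xi>. \<integral>\<^sup>+s. F \<xi> * ennreal (\<bar>\<xi> - s\<bar> powr b) * ennreal (\<bar>s\<bar> powr a) \<partial>lborel \<partial>lborel)"
    by (rule lborel_pair.Fubini') measurable
  also have "\<dots> = (\<integral>\<^sup>+\<xi>. F \<xi> * (\<integral>\<^sup>+s. ennreal (\<bar>\<xi> - s\<bar> powr b * \<bar>s\<bar> powr a) \<partial>lborel) \<partial>lborel)"
    by (intro nn_integral_cong) (simp add: nn_integral_cmult[symmetric] ennreal_mult' mult.assoc)
  also have "\<dots> = (\<integral>\<^sup>+\<xi>. F \<xi> * (ennreal (\<bar>\<xi>\<bar> powr (1 + a + b)) * B) \<partial>lborel)"
  proof (intro nn_integral_cong_AE)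
    show "AE \<xi> in lborel. F \<xi> * (\<integral>\<^sup>+s. ennreal (\<bar>\<xi> - s\<bar> powr b * \<bar>s\<bar> powr a) \<partial>lborel)
         = F \<xi> * (ennreal (\<bar>\<xi>\<bar> powr (1 + a + b)) * B)"
      using AE_lborel_singleton[of 0] by eventually_elim (subst beta_kernel_scaling, auto simp: B_def algebra_simps)
  qed
  also have "\<dots> = B * (\<integral>\<^sup>+\<xi>. F \<xi> * ennreal (\<bar>\<xi>\<bar> powr (1 + a + b)) \<partial>lborel)"
    by (subst nn_integral_cmult[symmetric]) (auto simp: mult_ac)
  finally show ?thesis unfolding B_def .
qed

lemma riesz_integral_bound:
  fixes b :: real
  assumes b: "-1 < b" and n: "1 \<le> n"
  shows "real n * (1 + b) < 1 \<Longrightarrow> \<exists>c<\<infinity>. \<forall>F\<in>borel_measurable borel.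
     riesz_integral b n F \<le> c * (\<integral>\<^sup>+\<xi>. F \<xi> * ennreal (\<bar>\<xi>\<bar> powr (real n * (1 + b) - 1)) \<partial>lborel)"
  using n
proof (induction n rule: dec_induct)
  case base
  show ?case by (intro exI[of _ 1]) (simp add: riesz_integral_one)
next
  case (step n)
  define a where "a = real n * (1 + b) - 1"
  have "real n * (1 + b) < 1" using step b by (simp add: algebra_simps)
  moreover have "1 \<le> real n" using step by simp
  moreover have "0 < real n * (1 + b)" using \<open>1 \<le> real n\<close> b by simp
  ultimately have a: "-1 < a" "a \<le> 0" "a + b < -1"
    using b step.prems unfolding a_def by (auto simp: algebra_simps)
  from step.IH \<open>real n * (1 + b) < 1\<close> obtain c where c: "c < \<infinity>" and cF: "\<And>F. F \<in> borel_measurable borel \<Longrightarrow>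
     riesz_integral b n F \<le> c * (\<integral>\<^sup>+\<xi>. F \<xi> * ennreal (\<bar>\<xi>\<bar> powr a) \<partial>lborel)"
    unfolding a_def by blast
  define B where "B = (\<integral>\<^sup>+t. ennreal (\<bar>1-t\<bar> powr b * \<bar>t\<bar> powr a) \<partial>lborel)"
  have "B < \<infinity>" unfolding B_def using a b by (intro beta_kernel_finite) auto
  moreover have "riesz_integral b (Suc n) F
      \<le> (c * B) * (\<integral>\<^sup>+\<xi>. F \<xi> * ennreal (\<bar>\<xi>\<bar> powr (real (Suc n) * (1 + b) - 1)) \<partial>lborel)"
    if F[measurable]: "F \<in> borel_measurable borel" for F
  proof -
    have "riesz_integral b (Suc n) F = riesz_integral b n (\<lambda>s. \<integral>\<^sup>+y. F (s + y) * ennreal (\<bar>y\<bar> powr b) \<partial>lborel)"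
      by (rule riesz_integral_Suc) measurable
    also have "\<dots> \<le> c * (\<integral>\<^sup>+s. (\<integral>\<^sup>+y. F (s + y) * ennreal (\<bar>y\<bar> powr b) \<partial>lborel) * ennreal (\<bar>s\<bar> powr a) \<partial>lborel)"
      by (rule cF) measurable
    also have "\<dots> = c * (B * (\<integral>\<^sup>+\<xi>. F \<xi> * ennreal (\<bar>\<xi>\<bar> powr (1 + a + b)) \<partial>lborel))"
      unfolding B_def by (simp add: riesz_composition)
    also have "1 + a + b = real (Suc n) * (1 + b) - 1" unfolding a_def by (simp add: algebra_simps)
    finally show ?thesis by (simp add: mult.assoc)
  qed
  ultimately show ?case using c by (intro exI[of _ "c * B"]) (auto simp: ennreal_mult_less_top)
qed

lemma trunc_fourier_measurable[measurable]:
  assumes [measurable]: "\<theta> \<in> borel_measurable borel"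
  shows "trunc_fourier \<theta> R \<in> borel_measurable borel"
  unfolding trunc_fourier_def interval_lebesgue_integral_def set_lebesgue_integral_def einterval_def
  by measurable

lemma cmod_diff_sq_le: "(cmod (a - b))\<^sup>2 \<le> 2 * (cmod (a - c))\<^sup>2 + 2 * (cmod (b - c))\<^sup>2"
proof -
  have "cmod (a - b) \<le> cmod (a - c) + cmod (b - c)"
    by (metis norm_diff_triangle_le norm_minus_commute order_refl)
  then have "(cmod (a - b))\<^sup>2 \<le> (cmod (a - c) + cmod (b - c))\<^sup>2" by (simp add: power_mono)
  also have "\<dots> \<le> 2 * (cmod (a - c))\<^sup>2 + 2 * (cmod (b - c))\<^sup>2"
    by (smt (verit) sum_squares_bound power2_sum)
  finally show ?thesis .
qed

text \<open>The L2 Fourier transform is unique up to null sets: two L2 limits of the same truncated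
  integrals are at L2 distance at most 2a(R) + 2b(R) for every R, hence zero.\<close>
lemma fourier_L2_AE_unique:
  assumes f1: "fourier_L2 \<theta> g" and f2: "fourier_L2 \<theta> g'"
  shows "AE \<xi> in lborel. g \<xi> = g' \<xi>"
proof -
  have [measurable]: "g \<in> borel_measurable borel" "g' \<in> borel_measurable borel" "\<theta> \<in> borel_measurable borel"
    using f1 f2 unfolding fourier_L2_def L2_fun_def by auto
  let ?a = "\<lambda>R. \<integral>\<^sup>+ \<xi>. ennreal ((cmod (g \<xi> - trunc_fourier \<theta> R \<xi>))\<^sup>2) \<partial>lborel"
  let ?b = "\<lambda>R. \<integral>\<^sup>+ \<xi>. ennreal ((cmod (g' \<xi> - trunc_fourier \<theta> R \<xi>))\<^sup>2) \<partial>lborel"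
  have a: "(?a \<longlongrightarrow> 0) at_top" and b: "(?b \<longlongrightarrow> 0) at_top" using f1 f2 unfolding fourier_L2_def by auto
  have lim: "((\<lambda>R. 2 * ?a R + 2 * ?b R) \<longlongrightarrow> 0) at_top"
    using tendsto_add[OF tendsto_mult_ennreal[OF tendsto_const a] tendsto_mult_ennreal[OF tendsto_const b]] by simp
  have le: "(\<integral>\<^sup>+ \<xi>. ennreal ((cmod (g \<xi> - g' \<xi>))\<^sup>2) \<partial>lborel) \<le> 2 * ?a R + 2 * ?b R" for R
  proof -
    have "(\<integral>\<^sup>+ \<xi>. ennreal ((cmod (g \<xi> - g' \<xi>))\<^sup>2) \<partial>lborel) \<le>
       (\<integral>\<^sup>+ \<xi>. 2 * ennreal ((cmod (g \<xi> - trunc_fourier \<theta> R \<xi>))\<^sup>2)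
              + 2 * ennreal ((cmod (g' \<xi> - trunc_fourier \<theta> R \<xi>))\<^sup>2) \<partial>lborel)"
    proof (intro nn_integral_mono)
      fix x
      have "ennreal ((cmod (g x - g' x))\<^sup>2) \<le> ennreal (2 * (cmod (g x - trunc_fourier \<theta> R x))\<^sup>2
          + 2 * (cmod (g' x - trunc_fourier \<theta> R x))\<^sup>2)"
        by (intro ennreal_leI cmod_diff_sq_le)
      then show "ennreal ((cmod (g x - g' x))\<^sup>2) \<le> 2 * ennreal ((cmod (g x - trunc_fourier \<theta> R x))\<^sup>2)
          + 2 * ennreal ((cmod (g' x - trunc_fourier \<theta> R x))\<^sup>2)"
        by (simp add: ennreal_plus ennreal_mult del: ennreal_plus_if)
    qed
    also have "\<dots> = 2 * ?a R + 2 * ?b R"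
      by (simp add: nn_integral_add nn_integral_cmult)
    finally show ?thesis .
  qed
  have "(\<integral>\<^sup>+ \<xi>. ennreal ((cmod (g \<xi> - g' \<xi>))\<^sup>2) \<partial>lborel) = 0"
    using tendsto_lowerbound[OF lim always_eventually[OF allI[OF le]]] by simp
  then have "AE \<xi> in lborel. ennreal ((cmod (g \<xi> - g' \<xi>))\<^sup>2) = 0"
    by (subst (asm) nn_integral_0_iff_AE) auto
  then show ?thesis by eventually_elim simp
qed

lemma qfold_integrand_factor:
  fixes u :: "nat \<Rightarrow> real" and G s :: real
  assumes "0 \<le> G"
  shows "ennreal (G / (\<bar>s\<bar> ^ (2 * K) * \<bar>\<Prod>i<q. u i\<bar> powr (2 * d)))
    = ennreal (G / \<bar>s\<bar> ^ (2 * K)) * (\<Prod>i<q. ennreal (\<bar>u i\<bar> powr (-2*d)))"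
proof -
  have "\<bar>\<Prod>i<q. u i\<bar> powr (2 * d) = (\<Prod>i<q. \<bar>u i\<bar> powr (2*d))"
    by (simp add: abs_prod prod_powr_distrib)
  then have "inverse (\<bar>\<Prod>i<q. u i\<bar> powr (2 * d)) = (\<Prod>i<q. \<bar>u i\<bar> powr (-2*d))"
    by (simp add: prod_inversef[symmetric] powr_minus)
  then have eq: "G / (\<bar>s\<bar> ^ (2 * K) * \<bar>\<Prod>i<q. u i\<bar> powr (2 * d))
      = (G / \<bar>s\<bar> ^ (2 * K)) * (\<Prod>i<q. \<bar>u i\<bar> powr (-2*d))"
    by (simp add: divide_inverse mult.assoc)
  have "ennreal ((G / \<bar>s\<bar> ^ (2 * K)) * (\<Prod>i<q. \<bar>u i\<bar> powr (-2*d)))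
      = ennreal (G / \<bar>s\<bar> ^ (2 * K)) * ennreal (\<Prod>i<q. \<bar>u i\<bar> powr (-2*d))"
    by (rule ennreal_mult) (simp_all add: assms prod_nonneg)
  then show ?thesis unfolding eq by (simp add: prod_ennreal)
qed

text \<open>It is a Riesz integral with b = -2d, and q(1 - 2d) - 1 - 2K is exactly
  the exponent of the weight in the definition of the class.\<close>
theorem qfold_integral_finite:
  fixes d :: real and q K :: nat
  assumes d: "0 < d" "d < 1/2" and q: "1 \<le> q" "real q < 1 / (1 - 2 * d)"
    and S: "S_class K q d \<theta>" and fg: "fourier_L2 \<theta> g"
  shows "qfold_integral K q d g < \<infinity>"
proof -
  from S obtain g' where fg': "fourier_L2 \<theta> g'" and fin:
    "(\<integral>\<^sup>+ \<xi>. ennreal ((cmod (g' \<xi>))\<^sup>2 * \<bar>\<xi>\<bar> powr (real q - 1 - 2 * d * real q - 2 * real K)) \<partial>lborel) < \<infinity>"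
    unfolding S_class_def by blast
  have [measurable]: "g \<in> borel_measurable borel" using fg unfolding fourier_L2_def L2_fun_def by auto
  have "real q * (1 + -2*d) < 1" using q d by (simp add: field_simps)
  then obtain c where c: "c < \<infinity>" and cF: "\<And>F. F \<in> borel_measurable borel \<Longrightarrow>
     riesz_integral (-2*d) q F \<le> c * (\<integral>\<^sup>+\<xi>. F \<xi> * ennreal (\<bar>\<xi>\<bar> powr (real q * (1 + -2*d) - 1)) \<partial>lborel)"
    using riesz_integral_bound[of "-2*d" q] d q by auto
  define F where "F = (\<lambda>\<xi>. ennreal ((cmod (g \<xi>))\<^sup>2 / \<bar>\<xi>\<bar> ^ (2 * K)))"
  have [measurable]: "F \<in> borel_measurable borel" unfolding F_def by measurable
  have "qfold_integral K q d g = riesz_integral (-2*d) q F"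
    unfolding qfold_integral_def riesz_integral_def F_def
    by (intro nn_integral_cong qfold_integrand_factor) simp
  also have "\<dots> \<le> c * (\<integral>\<^sup>+\<xi>. F \<xi> * ennreal (\<bar>\<xi>\<bar> powr (real q * (1 + -2*d) - 1)) \<partial>lborel)"
    by (rule cF) measurable
  also have "(\<integral>\<^sup>+\<xi>. F \<xi> * ennreal (\<bar>\<xi>\<bar> powr (real q * (1 + -2*d) - 1)) \<partial>lborel)
     = (\<integral>\<^sup>+ \<xi>. ennreal ((cmod (g' \<xi>))\<^sup>2 * \<bar>\<xi>\<bar> powr (real q - 1 - 2 * d * real q - 2 * real K)) \<partial>lborel)"
  proof (intro nn_integral_cong_AE)
    show "AE \<xi> in lborel. F \<xi> * ennreal (\<bar>\<xi>\<bar> powr (real q * (1 + -2*d) - 1))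
      = ennreal ((cmod (g' \<xi>))\<^sup>2 * \<bar>\<xi>\<bar> powr (real q - 1 - 2 * d * real q - 2 * real K))"
      using fourier_L2_AE_unique[OF fg fg'] AE_lborel_singleton[of 0]
    proof eventually_elim
      case (elim \<xi>)
      then have "\<bar>\<xi>\<bar> ^ (2 * K) = \<bar>\<xi>\<bar> powr (real (2 * K))" by (subst powr_realpow) auto
      then have "\<bar>\<xi>\<bar> powr (real q * (1 + -2*d) - 1) / \<bar>\<xi>\<bar> ^ (2 * K)
          = \<bar>\<xi>\<bar> powr (real q - 1 - 2 * d * real q - 2 * real K)"
        by (simp add: powr_diff[symmetric] algebra_simps)
      then show ?case unfolding F_def using elim
        by (simp add: ennreal_mult'[symmetric] field_simps)
    qed
  qed
  finally show ?thesis using fin c by (simp add: ennreal_mult_less_top order_le_less_trans)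
qed

definition fourier_integral :: "(real \<Rightarrow> complex) \<Rightarrow> real \<Rightarrow> complex" where
  "fourier_integral \<phi> \<eta> = (\<integral>s. \<phi> s * exp (- \<i> * complex_of_real (s * \<eta>)) \<partial>lborel)"

definition gauss_window :: "real \<Rightarrow> real \<Rightarrow> real" where
  "gauss_window \<sigma> \<eta> = exp (-(\<eta>/\<sigma>)\<^sup>2/2)"

definition gauss_kernel :: "real \<Rightarrow> real \<Rightarrow> real" where
  "gauss_kernel \<sigma> x = \<sigma> * sqrt (2*pi) * exp (-(\<sigma>*x)\<^sup>2/2)"

lemma cmod_exp_minus_i_real[simp]: "cmod (exp (- \<i> * complex_of_real r)) = 1"
  using norm_exp_i_times[of "-r"] by simp

lemma borel_measurable_cnj[measurable (raw)]:
  fixes f :: "'a \<Rightarrow> complex"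
  assumes [measurable]: "f \<in> borel_measurable M"
  shows "(\<lambda>x. cnj (f x)) \<in> borel_measurable M"
proof -
  have "(\<lambda>x. cnj (f x)) = (\<lambda>x. complex_of_real (Re (f x)) - \<i> * complex_of_real (Im (f x)))"
    by (auto simp: complex_eq_iff)
  also have "\<dots> \<in> borel_measurable M" by measurable
  finally show ?thesis .
qed

lemma fourier_integral_measurable[measurable]:
  assumes [measurable]: "\<phi> \<in> borel_measurable borel"
  shows "fourier_integral \<phi> \<in> borel_measurable borel"
  unfolding fourier_integral_def by measurable

lemma fourier_integral_norm_le: "cmod (fourier_integral \<phi> \<eta>) \<le> (\<integral>s. cmod (\<phi> s) \<partial>lborel)"
  unfolding fourier_integral_def
  by (rule order_trans[OF integral_norm_bound]) (simp add: norm_mult)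

lemma norm_integral_le_nn_integral:
  "ennreal (norm (integral\<^sup>L M f)) \<le> (\<integral>\<^sup>+x. ennreal (norm (f x)) \<partial>M)"
  by (cases "integrable M f") (auto simp: integral_norm_bound_ennreal not_integrable_integral_eq)

text \<open>The Gaussian window is a multiple of a normal density, hence integrable.\<close>
lemma gauss_window_integrable:
  assumes s: "\<sigma> > 0"
  shows "integrable lborel (gauss_window \<sigma>)"
proof -
  have "gauss_window \<sigma> = (\<lambda>\<eta>. (\<sigma> * sqrt (2*pi)) * normal_density 0 \<sigma> \<eta>)"
  proof
    fix \<eta>
    have "sqrt (2 * pi * \<sigma>\<^sup>2) = sqrt (2*pi) * \<sigma>" using s by (simp add: real_sqrt_mult)
    moreover have "(\<eta>/\<sigma>)\<^sup>2/2 = (\<eta> - 0)\<^sup>2 / (2 * \<sigma>\<^sup>2)" using s by (simp add: power_divide)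
    ultimately show "gauss_window \<sigma> \<eta> = (\<sigma> * sqrt (2*pi)) * normal_density 0 \<sigma> \<eta>"
      unfolding gauss_window_def normal_density_def using s by simp
  qed
  then show ?thesis using s by simp
qed

text \<open>The Fourier transform of the Gaussian window is the Gaussian kernel; this is the
  characteristic function of the standard normal distribution, rescaled.\<close>
lemma gauss_window_fourier:
  assumes s: "\<sigma> > 0"
  shows "(\<integral>\<eta>. complex_of_real (gauss_window \<sigma> \<eta>) * exp (\<i> * complex_of_real (x * \<eta>)) \<partial>lborel)
     = complex_of_real (gauss_kernel \<sigma> x)"
proof -
  have ch: "(\<integral>y. std_normal_density y *\<^sub>R iexp (t * y) \<partial>lborel) = complex_of_real (exp (- (t^2) / 2))" for t
  proof -
    have "char std_normal_distribution t = complex_of_real (exp (- (t^2) / 2))"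
      by (simp add: char_std_normal_distribution)
    then show ?thesis unfolding char_def
      by (subst (asm) integral_density) auto
  qed
  have "(\<integral>\<eta>. complex_of_real (exp (-(\<eta>/\<sigma>)\<^sup>2/2)) * exp (\<i> * complex_of_real (x * \<eta>)) \<partial>lborel)
      = \<bar>\<sigma>\<bar> *\<^sub>R (\<integral>y. complex_of_real (exp (-((0 + \<sigma>*y)/\<sigma>)\<^sup>2/2)) * exp (\<i> * complex_of_real (x * (0 + \<sigma>*y))) \<partial>lborel)"
    by (rule lborel_integral_real_affine) (use s in auto)
  also have "(\<lambda>y. complex_of_real (exp (-((0 + \<sigma>*y)/\<sigma>)\<^sup>2/2)) * exp (\<i> * complex_of_real (x * (0 + \<sigma>*y))))
     = (\<lambda>y. complex_of_real (sqrt (2*pi)) * (std_normal_density y *\<^sub>R iexp ((\<sigma>*x) * y)))"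
    using s by (auto simp: std_normal_density_def scaleR_conv_of_real mult_ac)
  also have "(\<integral>y. complex_of_real (sqrt (2*pi)) * (std_normal_density y *\<^sub>R iexp ((\<sigma>*x) * y)) \<partial>lborel)
     = complex_of_real (sqrt (2*pi)) * complex_of_real (exp (- ((\<sigma>*x)^2) / 2))"
    by (simp only: integral_mult_right_zero ch)
  finally show ?thesis using s by (simp add: gauss_window_def gauss_kernel_def scaleR_conv_of_real mult_ac)
qed

text \<open>The Gaussian kernel has total mass 2\<pi> (it is 2\<pi> times a normal density).\<close>
lemma gauss_kernel_nn_integral:
  assumes s: "\<sigma> > 0"
  shows "(\<integral>\<^sup>+x. ennreal (gauss_kernel \<sigma> x) \<partial>lborel) = ennreal (2*pi)"
proof -
  have eq: "gauss_kernel \<sigma> x = 2*pi * normal_density 0 (1/\<sigma>) x" for x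
  proof -
    have "sqrt (2 * pi * (1/\<sigma>)\<^sup>2) = sqrt (2*pi) / \<sigma>" using s
      by (simp add: real_sqrt_divide power_divide)
    moreover have "2*pi / (sqrt (2*pi)/\<sigma>) = \<sigma> * sqrt (2*pi)"
    proof -
      have "sqrt (2*pi) * sqrt (2*pi) = 2*pi" "sqrt (2*pi) > 0" by simp_all
      then show ?thesis using s by (simp add: field_simps)
    qed
    ultimately have A: "2*pi / sqrt (2 * pi * (1/\<sigma>)\<^sup>2) = \<sigma> * sqrt (2*pi)" by simp
    have E: "-(x - 0)\<^sup>2 / (2 * (1/\<sigma>)\<^sup>2) = -(\<sigma>*x)\<^sup>2/2" using s
      by (simp add: power_divide power_mult_distrib field_simps)
    show ?thesis unfolding gauss_kernel_def normal_density_def E A[symmetric] by simp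
  qed
  have "(\<integral>\<^sup>+x. ennreal (normal_density 0 (1/\<sigma>) x) \<partial>lborel) = 1"
    using s integrable_normal_density[of "1/\<sigma>" 0] integral_normal_density[of "1/\<sigma>" 0]
    by (subst nn_integral_eq_integral) auto
  then show ?thesis unfolding eq
    by (subst ennreal_mult) (auto simp: nn_integral_cmult)
qed

lemma integrable_pair_product_bound:
  fixes H :: "real \<times> real \<Rightarrow> 'b::{banach, second_countable_topology}" and f g :: "real \<Rightarrow> real"
  assumes f: "integrable lborel f" and g: "integrable lborel g"
    and H[measurable]: "H \<in> borel_measurable (lborel \<Otimes>\<^sub>M lborel)"
    and b: "\<And>s t. norm (H (s,t)) \<le> norm (f s) * norm (g t)"
  shows "integrable (lborel \<Otimes>\<^sub>M lborel) H"
proof (rule integrableI_bounded)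
  have [measurable]: "f \<in> borel_measurable borel" "g \<in> borel_measurable borel" using f g by auto
  have "(\<integral>\<^sup>+p. ennreal (norm (H p)) \<partial>(lborel \<Otimes>\<^sub>M lborel))
      \<le> (\<integral>\<^sup>+p. ennreal (norm (f (fst p))) * ennreal (norm (g (snd p))) \<partial>(lborel \<Otimes>\<^sub>M lborel))"
  proof (intro nn_integral_mono)
    fix p :: "real \<times> real"
    show "ennreal (norm (H p)) \<le> ennreal (norm (f (fst p))) * ennreal (norm (g (snd p)))"
      using b[of "fst p" "snd p"] by (cases p) (simp add: ennreal_mult'[symmetric] ennreal_leI)
  qed
  also have "\<dots> = (\<integral>\<^sup>+s. \<integral>\<^sup>+t. ennreal (norm (f s)) * ennreal (norm (g t)) \<partial>lborel \<partial>lborel)"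
    using lborel.nn_integral_fst[of "\<lambda>p. ennreal (norm (f (fst p))) * ennreal (norm (g (snd p)))" lborel]
    by simp
  also have "\<dots> = (\<integral>\<^sup>+s. ennreal (norm (f s)) \<partial>lborel) * (\<integral>\<^sup>+t. ennreal (norm (g t)) \<partial>lborel)"
    by (simp add: nn_integral_cmult nn_integral_multc)
  also have "\<dots> < \<infinity>" using f g by (auto simp: integrable_iff_bounded ennreal_mult_less_top)
  finally show "(\<integral>\<^sup>+p. ennreal (norm (H p)) \<partial>(lborel \<Otimes>\<^sub>M lborel)) < \<infinity>" .
qed simp

lemma cnj_exp_mult:
  "cnj (exp (- \<i> * complex_of_real (t*\<eta>))) * exp (- \<i> * complex_of_real (s*\<eta>))
    = exp (\<i> * complex_of_real ((t-s)*\<eta>))"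
  by (simp add: exp_cnj exp_add[symmetric] algebra_simps)

text \<open>The Gaussian-weighted energy w |\<Phi>|^2 of the Fourier integral \<Phi> of an integrable \<phi> is
  integrable, since |\<Phi>| is bounded by the L1 norm of \<phi>.\<close>
lemma gauss_energy_integrable:
  assumes s: "\<sigma> > 0" and [measurable]: "\<phi> \<in> borel_measurable borel" and \<phi>i: "integrable lborel \<phi>"
  shows "integrable lborel (\<lambda>\<eta>. gauss_window \<sigma> \<eta> * (cmod (fourier_integral \<phi> \<eta>))\<^sup>2)"
proof (rule Bochner_Integration.integrable_bound)
  define N1 where "N1 = (\<integral>s. cmod (\<phi> s) \<partial>lborel)"
  show "integrable lborel (\<lambda>\<eta>. gauss_window \<sigma> \<eta> * N1\<^sup>2)"
    using gauss_window_integrable[OF s] by simp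
  show "AE \<eta> in lborel. norm (gauss_window \<sigma> \<eta> * (cmod (fourier_integral \<phi> \<eta>))\<^sup>2)
      \<le> norm (gauss_window \<sigma> \<eta> * N1\<^sup>2)"
  proof (intro AE_I2)
    fix \<eta>
    have "(cmod (fourier_integral \<phi> \<eta>))\<^sup>2 \<le> N1\<^sup>2"
      unfolding N1_def by (intro power_mono fourier_integral_norm_le) simp
    then show "norm (gauss_window \<sigma> \<eta> * (cmod (fourier_integral \<phi> \<eta>))\<^sup>2) \<le> norm (gauss_window \<sigma> \<eta> * N1\<^sup>2)"
      by (simp add: gauss_window_def abs_mult mult_left_mono)
  qed
qed (simp add: gauss_window_def)

text \<open>Fubini and the Gaussian Fourier pair: integrating w cnj(\<Phi>) against a character gives
  the convolution of cnj(\<phi>) with the Gaussian kernel.\<close>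
lemma gauss_window_convolution:
  assumes s: "\<sigma> > 0" and [measurable]: "\<phi> \<in> borel_measurable borel" and \<phi>i: "integrable lborel \<phi>"
  shows "(\<integral>\<eta>. complex_of_real (gauss_window \<sigma> \<eta>) * cnj (fourier_integral \<phi> \<eta>)
            * exp (- \<i> * complex_of_real (s*\<eta>)) \<partial>lborel)
     = (\<integral>t. cnj (\<phi> t) * complex_of_real (gauss_kernel \<sigma> (t - s)) \<partial>lborel)"
proof -
  let ?w = "gauss_window \<sigma>" and ?e = "\<lambda>s \<eta>. exp (- \<i> * complex_of_real (s*\<eta>))"
  have [measurable]: "?w \<in> borel_measurable borel" unfolding gauss_window_def by measurable
  have "(\<integral>\<eta>. complex_of_real (?w \<eta>) * cnj (fourier_integral \<phi> \<eta>) * ?e s \<eta> \<partial>lborel)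
     = (\<integral>\<eta>. \<integral>t. complex_of_real (?w \<eta>) * cnj (\<phi> t * ?e t \<eta>) * ?e s \<eta> \<partial>lborel \<partial>lborel)"
  proof (intro Bochner_Integration.integral_cong refl)
    fix \<eta>
    have "cnj (fourier_integral \<phi> \<eta>) = (\<integral>t. cnj (\<phi> t * ?e t \<eta>) \<partial>lborel)"
      unfolding fourier_integral_def by (simp only: Bochner_Integration.integral_cnj)
    then show "complex_of_real (?w \<eta>) * cnj (fourier_integral \<phi> \<eta>) * ?e s \<eta>
        = (\<integral>t. complex_of_real (?w \<eta>) * cnj (\<phi> t * ?e t \<eta>) * ?e s \<eta> \<partial>lborel)"
      by simp
  qed
  also have "\<dots> = (\<integral>t. \<integral>\<eta>. complex_of_real (?w \<eta>) * cnj (\<phi> t * ?e t \<eta>) * ?e s \<eta> \<partial>lborel \<partial>lborel)"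
  proof (rule lborel_pair.Fubini_integral[where f="\<lambda>t \<eta>. complex_of_real (?w \<eta>) * cnj (\<phi> t * ?e t \<eta>) * ?e s \<eta>"])
    show "integrable (lborel \<Otimes>\<^sub>M lborel) (\<lambda>(t, \<eta>). complex_of_real (?w \<eta>) * cnj (\<phi> t * ?e t \<eta>) * ?e s \<eta>)"
      using \<phi>i gauss_window_integrable[OF s]
      by (intro integrable_pair_product_bound[where f="\<lambda>t. cmod (\<phi> t)" and g="?w"])
        (auto simp: norm_mult gauss_window_def)
  qed
  also have "\<dots> = (\<integral>t. cnj (\<phi> t) * complex_of_real (gauss_kernel \<sigma> (t - s)) \<partial>lborel)"
  proof (intro Bochner_Integration.integral_cong refl)
    fix t
    have "complex_of_real (?w \<eta>) * cnj (\<phi> t * ?e t \<eta>) * ?e s \<eta>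
        = cnj (\<phi> t) * (complex_of_real (?w \<eta>) * (cnj (?e t \<eta>) * ?e s \<eta>))" for \<eta>
      by (simp add: mult_ac)
    then have "(\<lambda>\<eta>. complex_of_real (?w \<eta>) * cnj (\<phi> t * ?e t \<eta>) * ?e s \<eta>)
        = (\<lambda>\<eta>. cnj (\<phi> t) * (complex_of_real (?w \<eta>) * exp (\<i> * complex_of_real ((t-s) * \<eta>))))"
      by (simp only: cnj_exp_mult)
    then show "(\<integral>\<eta>. complex_of_real (?w \<eta>) * cnj (\<phi> t * ?e t \<eta>) * ?e s \<eta> \<partial>lborel)
        = cnj (\<phi> t) * complex_of_real (gauss_kernel \<sigma> (t - s))"
      by (simp only: integral_mult_right_zero gauss_window_fourier[OF s])
  qed
  finally show ?thesis .
qed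

text \<open>Expanding |\<Phi>|^2 = cnj(\<Phi>) \<Phi> and applying Fubini expresses the Gaussian-weighted energy of
  \<Phi> as a quadratic form of \<phi> with the Gaussian kernel.\<close>
lemma gauss_energy_identity:
  assumes s: "\<sigma> > 0" and [measurable]: "\<phi> \<in> borel_measurable borel" and \<phi>i: "integrable lborel \<phi>"
  shows "complex_of_real (\<integral>\<eta>. gauss_window \<sigma> \<eta> * (cmod (fourier_integral \<phi> \<eta>))\<^sup>2 \<partial>lborel)
     = (\<integral>s. \<phi> s * (\<integral>t. cnj (\<phi> t) * complex_of_real (gauss_kernel \<sigma> (t - s)) \<partial>lborel) \<partial>lborel)"
proof -
  let ?w = "gauss_window \<sigma>" and ?e = "\<lambda>s \<eta>. exp (- \<i> * complex_of_real (s*\<eta>))"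
    and ?\<Phi> = "fourier_integral \<phi>"
  have [measurable]: "?w \<in> borel_measurable borel" unfolding gauss_window_def by measurable
  define N1 where "N1 = (\<integral>s. cmod (\<phi> s) \<partial>lborel)"
  have "complex_of_real (\<integral>\<eta>. ?w \<eta> * (cmod (?\<Phi> \<eta>))\<^sup>2 \<partial>lborel)
      = (\<integral>\<eta>. \<integral>s. complex_of_real (?w \<eta>) * cnj (?\<Phi> \<eta>) * (\<phi> s * ?e s \<eta>) \<partial>lborel \<partial>lborel)"
  proof -
    have sq: "complex_of_real (?w \<eta> * (cmod (?\<Phi> \<eta>))\<^sup>2) = complex_of_real (?w \<eta>) * cnj (?\<Phi> \<eta>) * ?\<Phi> \<eta>" for \<eta>
      using complex_norm_square[of "?\<Phi> \<eta>"] by (simp add: mult_ac)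
    have lin: "(\<integral>s. z * (\<phi> s * ?e s \<eta>) \<partial>lborel) = z * ?\<Phi> \<eta>" for z \<eta>
      by (simp only: integral_mult_right_zero fourier_integral_def)
    have pointwise: "complex_of_real (?w \<eta> * (cmod (?\<Phi> \<eta>))\<^sup>2)
        = (\<integral>s. complex_of_real (?w \<eta>) * cnj (?\<Phi> \<eta>) * (\<phi> s * ?e s \<eta>) \<partial>lborel)" for \<eta>
      by (simp only: sq lin)
    have "(\<integral>\<eta>. complex_of_real (?w \<eta> * (cmod (?\<Phi> \<eta>))\<^sup>2) \<partial>lborel)
        = (\<integral>\<eta>. \<integral>s. complex_of_real (?w \<eta>) * cnj (?\<Phi> \<eta>) * (\<phi> s * ?e s \<eta>) \<partial>lborel \<partial>lborel)"
      by (rule Bochner_Integration.integral_cong[OF refl pointwise])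
    then show ?thesis by (simp only: integral_complex_of_real)
  qed
  also have "\<dots> = (\<integral>s. \<integral>\<eta>. complex_of_real (?w \<eta>) * cnj (?\<Phi> \<eta>) * (\<phi> s * ?e s \<eta>) \<partial>lborel \<partial>lborel)"
  proof (rule lborel_pair.Fubini_integral[where f="\<lambda>s \<eta>. complex_of_real (?w \<eta>) * cnj (?\<Phi> \<eta>) * (\<phi> s * ?e s \<eta>)"])
    show "integrable (lborel \<Otimes>\<^sub>M lborel) (\<lambda>(s, \<eta>). complex_of_real (?w \<eta>) * cnj (?\<Phi> \<eta>) * (\<phi> s * ?e s \<eta>))"
    proof (rule integrable_pair_product_bound[where f="\<lambda>t. cmod (\<phi> t)" and g="\<lambda>\<eta>. ?w \<eta> * N1"])
      show "integrable lborel (\<lambda>t. cmod (\<phi> t))" using \<phi>i by simp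
      show "integrable lborel (\<lambda>\<eta>. ?w \<eta> * N1)" using gauss_window_integrable[OF s] by simp
      fix s \<eta> :: real
      have "?w \<eta> * cmod (?\<Phi> \<eta>) * cmod (\<phi> s) \<le> ?w \<eta> * N1 * cmod (\<phi> s)"
        unfolding N1_def using fourier_integral_norm_le[of \<phi> \<eta>]
        by (intro mult_right_mono mult_left_mono) (auto simp: gauss_window_def)
      moreover have "0 \<le> N1" unfolding N1_def by simp
      ultimately show "norm (case (s, \<eta>) of (s, \<eta>) \<Rightarrow> complex_of_real (?w \<eta>) * cnj (?\<Phi> \<eta>) * (\<phi> s * ?e s \<eta>))
          \<le> norm (cmod (\<phi> s)) * norm (?w \<eta> * N1)"
        by (simp add: norm_mult mult_ac abs_mult gauss_window_def)
    qed measurable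
  qed
  also have "\<dots> = (\<integral>s. \<phi> s * (\<integral>t. cnj (\<phi> t) * complex_of_real (gauss_kernel \<sigma> (t - s)) \<partial>lborel) \<partial>lborel)"
  proof (intro Bochner_Integration.integral_cong refl)
    fix s
    have "(\<lambda>\<eta>. complex_of_real (?w \<eta>) * cnj (?\<Phi> \<eta>) * (\<phi> s * ?e s \<eta>))
        = (\<lambda>\<eta>. \<phi> s * (complex_of_real (?w \<eta>) * cnj (?\<Phi> \<eta>) * ?e s \<eta>))"
      by (auto simp: mult_ac)
    then show "(\<integral>\<eta>. complex_of_real (?w \<eta>) * cnj (?\<Phi> \<eta>) * (\<phi> s * ?e s \<eta>) \<partial>lborel)
        = \<phi> s * (\<integral>t. cnj (\<phi> t) * complex_of_real (gauss_kernel \<sigma> (t - s)) \<partial>lborel)"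
      using gauss_window_convolution[OF s _ \<phi>i, of s] by simp
  qed
  finally show ?thesis .
qed

text \<open>Schur's test for a nonnegative convolution kernel of mass c: by 2xy \<le> x^2 + y^2 and
  translation invariance, the quadratic form is at most c times the squared L2 norm.\<close>
lemma convolution_quadratic_bound:
  fixes a G :: "real \<Rightarrow> real" and c :: real
  assumes [measurable]: "a \<in> borel_measurable borel" "G \<in> borel_measurable borel"
    and G0: "\<And>x. 0 \<le> G x" and c0: "0 \<le> c" and mass: "(\<integral>\<^sup>+x. ennreal (G x) \<partial>lborel) = ennreal c"
  shows "(\<integral>\<^sup>+s. \<integral>\<^sup>+t. ennreal (a s * a t * G (t - s)) \<partial>lborel \<partial>lborel)
    \<le> ennreal c * (\<integral>\<^sup>+s. ennreal ((a s)\<^sup>2) \<partial>lborel)"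
proof -
  define A where "A = (\<integral>\<^sup>+s. ennreal ((a s)\<^sup>2) \<partial>lborel)"
  have shift1: "(\<integral>\<^sup>+t. ennreal (G (t - s)) \<partial>lborel) = ennreal c" for s
    using nn_integral_real_affine[where f="\<lambda>x. ennreal (G x)" and c=1 and t="-s"] mass by simp
  have shift2: "(\<integral>\<^sup>+s. ennreal (G (t - s)) \<partial>lborel) = ennreal c" for t
    using nn_integral_real_affine[where f="\<lambda>x. ennreal (G x)" and c="-1" and t=t] mass by simp
  have half: "(\<integral>\<^sup>+t. ennreal ((a s)\<^sup>2/2 * G (t - s)) \<partial>lborel) = ennreal (c/2) * ennreal ((a s)\<^sup>2)" for s
  proof -
    have "(\<integral>\<^sup>+t. ennreal ((a s)\<^sup>2/2 * G (t - s)) \<partial>lborel) = ennreal ((a s)\<^sup>2/2) * (\<integral>\<^sup>+t. ennreal (G (t - s)) \<partial>lborel)"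
      by (subst nn_integral_cmult[symmetric]) (auto simp: G0 ennreal_mult[symmetric] intro!: nn_integral_cong)
    then show ?thesis unfolding shift1 using c0 by (simp add: ennreal_mult[symmetric] mult_ac)
  qed
  have half': "(\<integral>\<^sup>+s. ennreal ((a t)\<^sup>2/2 * G (t - s)) \<partial>lborel) = ennreal (c/2) * ennreal ((a t)\<^sup>2)" for t
  proof -
    have "(\<integral>\<^sup>+s. ennreal ((a t)\<^sup>2/2 * G (t - s)) \<partial>lborel) = ennreal ((a t)\<^sup>2/2) * (\<integral>\<^sup>+s. ennreal (G (t - s)) \<partial>lborel)"
      by (subst nn_integral_cmult[symmetric]) (auto simp: G0 ennreal_mult[symmetric] intro!: nn_integral_cong)
    then show ?thesis unfolding shift2 using c0 by (simp add: ennreal_mult[symmetric] mult_ac)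
  qed
  have "(\<integral>\<^sup>+s. \<integral>\<^sup>+t. ennreal (a s * a t * G (t - s)) \<partial>lborel \<partial>lborel)
      \<le> (\<integral>\<^sup>+s. \<integral>\<^sup>+t. ennreal ((a s)\<^sup>2/2 * G (t - s)) + ennreal ((a t)\<^sup>2/2 * G (t - s)) \<partial>lborel \<partial>lborel)"
  proof (intro nn_integral_mono)
    fix s t
    have "a s * a t \<le> (a s)\<^sup>2/2 + (a t)\<^sup>2/2"
      using sum_squares_bound[of "a s" "a t"] by (simp add: power2_eq_square)
    then have "a s * a t * G (t - s) \<le> (a s)\<^sup>2/2 * G (t - s) + (a t)\<^sup>2/2 * G (t - s)"
      using G0[of "t - s"] by (metis distrib_right mult_right_mono)
    then show "ennreal (a s * a t * G (t - s)) \<le> ennreal ((a s)\<^sup>2/2 * G (t - s)) + ennreal ((a t)\<^sup>2/2 * G (t - s))"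
      by (simp add: G0 ennreal_plus[symmetric] ennreal_leI del: ennreal_plus)
  qed
  also have "\<dots> = (\<integral>\<^sup>+s. \<integral>\<^sup>+t. ennreal ((a s)\<^sup>2/2 * G (t - s)) \<partial>lborel \<partial>lborel)
      + (\<integral>\<^sup>+s. \<integral>\<^sup>+t. ennreal ((a t)\<^sup>2/2 * G (t - s)) \<partial>lborel \<partial>lborel)"
    by (simp add: nn_integral_add)
  also have "(\<integral>\<^sup>+s. \<integral>\<^sup>+t. ennreal ((a t)\<^sup>2/2 * G (t - s)) \<partial>lborel \<partial>lborel)
      = (\<integral>\<^sup>+t. \<integral>\<^sup>+s. ennreal ((a t)\<^sup>2/2 * G (t - s)) \<partial>lborel \<partial>lborel)"
    by (rule lborel_pair.Fubini') measurable
  also have "(\<integral>\<^sup>+s. \<integral>\<^sup>+t. ennreal ((a s)\<^sup>2/2 * G (t - s)) \<partial>lborel \<partial>lborel) = ennreal (c/2) * A"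
    unfolding half A_def by (rule nn_integral_cmult) measurable
  also have "(\<integral>\<^sup>+t. \<integral>\<^sup>+s. ennreal ((a t)\<^sup>2/2 * G (t - s)) \<partial>lborel \<partial>lborel) = ennreal (c/2) * A"
    unfolding half' A_def by (rule nn_integral_cmult) measurable
  also have "ennreal (c/2) * A + ennreal (c/2) * A = ennreal c * A"
    using c0 by (simp add: distrib_right[symmetric] ennreal_plus[symmetric] del: ennreal_plus)
  finally show ?thesis unfolding A_def .
qed

lemma gauss_weighted_plancherel:
  assumes s: "\<sigma> > 0" and [measurable]: "\<phi> \<in> borel_measurable borel" and \<phi>i: "integrable lborel \<phi>"
  shows "(\<integral>\<^sup>+\<eta>. ennreal (gauss_window \<sigma> \<eta> * (cmod (fourier_integral \<phi> \<eta>))\<^sup>2) \<partial>lborel)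
     \<le> ennreal (2*pi) * (\<integral>\<^sup>+s. ennreal ((cmod (\<phi> s))\<^sup>2) \<partial>lborel)"
proof -
  let ?G = "gauss_kernel \<sigma>"
  define a where "a = (\<lambda>s. cmod (\<phi> s))"
  have [measurable]: "a \<in> borel_measurable borel" "?G \<in> borel_measurable borel"
    unfolding a_def gauss_kernel_def by measurable
  have G0: "0 \<le> ?G x" for x using s by (simp add: gauss_kernel_def)
  have conv: "ennreal (cmod (\<integral>t. cnj (\<phi> t) * complex_of_real (?G (t - s)) \<partial>lborel))
      \<le> (\<integral>\<^sup>+t. ennreal (a t * ?G (t - s)) \<partial>lborel)" for s
    using norm_integral_le_nn_integral[of lborel "\<lambda>t. cnj (\<phi> t) * complex_of_real (?G (t - s))"]
    by (simp add: a_def norm_mult G0)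
  have "(\<integral>\<^sup>+\<eta>. ennreal (gauss_window \<sigma> \<eta> * (cmod (fourier_integral \<phi> \<eta>))\<^sup>2) \<partial>lborel)
      = ennreal (\<integral>\<eta>. gauss_window \<sigma> \<eta> * (cmod (fourier_integral \<phi> \<eta>))\<^sup>2 \<partial>lborel)"
    by (rule nn_integral_eq_integral[OF gauss_energy_integrable[OF s _ \<phi>i]]) (auto simp: gauss_window_def)
  also have "\<dots> = ennreal (cmod (complex_of_real (\<integral>\<eta>. gauss_window \<sigma> \<eta> * (cmod (fourier_integral \<phi> \<eta>))\<^sup>2 \<partial>lborel)))"
    by (simp add: gauss_window_def)
  also have "\<dots> = ennreal (cmod (\<integral>s. \<phi> s * (\<integral>t. cnj (\<phi> t) * complex_of_real (?G (t - s)) \<partial>lborel) \<partial>lborel))"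
    by (simp only: gauss_energy_identity[OF s _ \<phi>i] \<open>\<phi> \<in> borel_measurable borel\<close>)
  also have "\<dots> \<le> (\<integral>\<^sup>+s. ennreal (a s) * (\<integral>\<^sup>+t. ennreal (a t * ?G (t - s)) \<partial>lborel) \<partial>lborel)"
    by (rule order_trans[OF norm_integral_le_nn_integral nn_integral_mono])
      (simp add: a_def norm_mult ennreal_mult mult_left_mono conv[unfolded a_def])
  also have "\<dots> = (\<integral>\<^sup>+s. \<integral>\<^sup>+t. ennreal (a s * a t * ?G (t - s)) \<partial>lborel \<partial>lborel)"
    by (intro nn_integral_cong, subst nn_integral_cmult[symmetric])
      (auto simp: a_def G0 ennreal_mult[symmetric] mult.assoc intro!: nn_integral_cong)
  also have "\<dots> \<le> ennreal (2*pi) * (\<integral>\<^sup>+s. ennreal ((a s)\<^sup>2) \<partial>lborel)"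
    by (rule convolution_quadratic_bound) (auto simp: G0 gauss_kernel_nn_integral[OF s])
  finally show ?thesis unfolding a_def .
qed

lemma bounded_support_L2_integrable:
  fixes \<phi> :: "real \<Rightarrow> complex"
  assumes [measurable]: "\<phi> \<in> borel_measurable borel"
    and supp: "\<And>s. s \<notin> {-L..L} \<Longrightarrow> \<phi> s = 0"
    and fin: "(\<integral>\<^sup>+s. ennreal ((cmod (\<phi> s))\<^sup>2) \<partial>lborel) < \<infinity>"
  shows "integrable lborel \<phi>"
proof (rule integrableI_bounded)
  have "(\<integral>\<^sup>+s. ennreal (norm (\<phi> s)) \<partial>lborel)
      \<le> (\<integral>\<^sup>+s. indicator {-L..L} s + ennreal ((cmod (\<phi> s))\<^sup>2) \<partial>lborel)"
  proof (intro nn_integral_mono)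
    fix s
    have "0 \<le> (cmod (\<phi> s) - 1/2)\<^sup>2" by simp
    then have "cmod (\<phi> s) \<le> 1 + (cmod (\<phi> s))\<^sup>2" by (simp add: power2_eq_square algebra_simps)
    then have "ennreal (cmod (\<phi> s)) \<le> ennreal (1 + (cmod (\<phi> s))\<^sup>2)" by (rule ennreal_leI)
    then show "ennreal (norm (\<phi> s)) \<le> indicator {-L..L} s + ennreal ((cmod (\<phi> s))\<^sup>2)"
      using supp[of s] by (cases "s \<in> {-L..L}") (simp_all add: ennreal_plus)
  qed
  also have "\<dots> = emeasure lborel {-L..L} + (\<integral>\<^sup>+s. ennreal ((cmod (\<phi> s))\<^sup>2) \<partial>lborel)"
    by (subst nn_integral_add) auto
  also have "\<dots> < \<infinity>" using fin by (simp add: emeasure_lborel_Icc_eq)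
  finally show "(\<integral>\<^sup>+s. ennreal (norm (\<phi> s)) \<partial>lborel) < \<infinity>" .
qed simp

text \<open>Plancherel inequality for integrable \<phi>: let the Gaussian window widen to 1 and apply
  Fatou's lemma.\<close>
lemma plancherel_inequality:
  assumes [measurable]: "\<phi> \<in> borel_measurable borel" and \<phi>i: "integrable lborel \<phi>"
  shows "(\<integral>\<^sup>+\<eta>. ennreal ((cmod (fourier_integral \<phi> \<eta>))\<^sup>2) \<partial>lborel)
     \<le> ennreal (2*pi) * (\<integral>\<^sup>+s. ennreal ((cmod (\<phi> s))\<^sup>2) \<partial>lborel)"
proof -
  let ?\<Phi> = "fourier_integral \<phi>"
  define u where "u = (\<lambda>n \<eta>. ennreal (gauss_window (real (Suc n)) \<eta> * (cmod (?\<Phi> \<eta>))\<^sup>2))"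
  have um: "u n \<in> borel_measurable lborel" for n unfolding u_def gauss_window_def by measurable
  have lim: "(\<lambda>n. u n \<eta>) \<longlonglongrightarrow> ennreal ((cmod (?\<Phi> \<eta>))\<^sup>2)" for \<eta>
  proof -
    have "(\<lambda>n. \<eta> * inverse (real (Suc n))) \<longlonglongrightarrow> \<eta> * 0"
      by (intro tendsto_intros LIMSEQ_inverse_real_of_nat)
    then have "(\<lambda>n. \<eta> / real (Suc n)) \<longlonglongrightarrow> 0" by (simp add: divide_inverse)
    then have "(\<lambda>n. exp (-(\<eta>/real (Suc n))\<^sup>2/2) * (cmod (?\<Phi> \<eta>))\<^sup>2) \<longlonglongrightarrow> exp (-(0::real)\<^sup>2/2) * (cmod (?\<Phi> \<eta>))\<^sup>2"
      by (intro tendsto_intros) auto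
    then show ?thesis unfolding u_def gauss_window_def by (intro tendsto_ennrealI) simp
  qed
  have "(\<integral>\<^sup>+\<eta>. ennreal ((cmod (?\<Phi> \<eta>))\<^sup>2) \<partial>lborel) = (\<integral>\<^sup>+\<eta>. liminf (\<lambda>n. u n \<eta>) \<partial>lborel)"
    by (intro nn_integral_cong) (simp add: lim_imp_Liminf[OF _ lim])
  also have "\<dots> \<le> liminf (\<lambda>n. \<integral>\<^sup>+\<eta>. u n \<eta> \<partial>lborel)"
    by (rule nn_integral_liminf) (use um in simp)
  also have "\<dots> \<le> ennreal (2*pi) * (\<integral>\<^sup>+s. ennreal ((cmod (\<phi> s))\<^sup>2) \<partial>lborel)"
    unfolding u_def by (intro Liminf_le always_eventually allI gauss_weighted_plancherel \<phi>i) auto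
  finally show ?thesis .
qed

definition window_fourier :: "(real \<Rightarrow> complex) \<Rightarrow> real \<Rightarrow> real \<Rightarrow> real \<Rightarrow> complex" where
  "window_fourier h a b = fourier_integral (\<lambda>s. indicator {a..b} s *\<^sub>R h s)"

lemma window_fourier_altdef:
  "window_fourier h a b \<eta> = (\<integral>s. indicator {a..b} s *\<^sub>R (h s * exp (- \<i> * complex_of_real (s * \<eta>))) \<partial>lborel)"
  by (simp add: window_fourier_def fourier_integral_def scaleR_conv_of_real mult.assoc)

lemma window_fourier_measurable[measurable]:
  assumes [measurable]: "h \<in> borel_measurable borel"
  shows "window_fourier h a b \<in> borel_measurable borel"
  unfolding window_fourier_def by measurable

lemma trunc_fourier_eq_window_fourier:
  assumes "0 \<le> R"
  shows "trunc_fourier h R = window_fourier h (-R) R"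
  using assms by (auto simp: trunc_fourier_def window_fourier_altdef interval_integral_Icc
      set_lebesgue_integral_def)

lemma L2_fun_window_integrable:
  assumes hL: "L2_fun h"
  shows "integrable lborel (\<lambda>s. indicator {a..b} s *\<^sub>R h s)"
proof (rule bounded_support_L2_integrable[where L="max \<bar>a\<bar> \<bar>b\<bar>"])
  have [measurable]: "h \<in> borel_measurable borel" and hi: "integrable lborel (\<lambda>t. (cmod (h t))\<^sup>2)"
    using hL unfolding L2_fun_def by auto
  have "(\<integral>\<^sup>+s. ennreal ((cmod (indicator {a..b} s *\<^sub>R h s))\<^sup>2) \<partial>lborel) \<le> (\<integral>\<^sup>+s. ennreal ((cmod (h s))\<^sup>2) \<partial>lborel)"
    by (intro nn_integral_mono) (auto simp: indicator_def)
  also have "\<dots> < \<infinity>" using hi by (simp add: integrable_iff_bounded)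
  finally show "(\<integral>\<^sup>+s. ennreal ((cmod (indicator {a..b} s *\<^sub>R h s))\<^sup>2) \<partial>lborel) < \<infinity>" .
qed (use hL in \<open>auto simp: L2_fun_def indicator_def\<close>)

lemma window_fourier_diff:
  assumes hL: "L2_fun h"
  shows "window_fourier h a b \<eta> - window_fourier h c d \<eta>
    = fourier_integral (\<lambda>s. (indicator {a..b} s - indicator {c..d} s) *\<^sub>R h s) \<eta>"
proof -
  have [measurable]: "h \<in> borel_measurable borel" using hL unfolding L2_fun_def by auto
  have int: "integrable lborel (\<lambda>s. (indicator {a..b} s *\<^sub>R h s) * exp (- \<i> * complex_of_real (s*\<eta>)))"
    for a b
    by (rule Bochner_Integration.integrable_bound[OF L2_fun_window_integrable[OF hL, of a b]])
      (auto simp: norm_mult)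
  show ?thesis
    unfolding window_fourier_def fourier_integral_def
    by (subst Bochner_Integration.integral_diff[OF int int, symmetric])
      (simp add: algebra_simps scaleR_conv_of_real)
qed

lemma tail_nn_integral_tendsto_zero:
  fixes F :: "real \<Rightarrow> real"
  assumes Fi: "integrable lborel F" and F0: "\<And>s. 0 \<le> F s"
  shows "((\<lambda>\<rho>. \<integral>\<^sup>+s. ennreal (indicator (-{-\<rho>..\<rho>}) s * F s) \<partial>lborel) \<longlongrightarrow> 0) at_top"
proof -
  have [measurable]: "F \<in> borel_measurable borel" using Fi by auto
  have i: "integrable lborel (\<lambda>s. indicator (-{-\<rho>..\<rho>}) s * F s)" for \<rho>
    using integrable_real_mult_indicator[of "-{-\<rho>..\<rho>}" lborel F] Fi by (simp add: mult_ac)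
  have eq: "(\<integral>\<^sup>+s. ennreal (indicator (-{-\<rho>..\<rho>}) s * F s) \<partial>lborel)
      = ennreal (\<integral>s. indicator (-{-\<rho>..\<rho>}) s * F s \<partial>lborel)" for \<rho>
    by (rule nn_integral_eq_integral[OF i]) (simp add: F0)
  have "((\<lambda>\<rho>. \<integral>s. indicator (-{-\<rho>..\<rho>}) s * F s \<partial>lborel) \<longlongrightarrow> (\<integral>s. 0 \<partial>(lborel::real measure))) at_top"
  proof (rule Bochner_Integration.integral_dominated_convergence_at_top[where w=F])
    show "AE x in lborel. ((\<lambda>\<rho>. indicator (-{-\<rho>..\<rho>}) x * F x) \<longlongrightarrow> 0) at_top"
    proof (intro AE_I2 tendsto_eventually)
      fix x :: real
      show "eventually (\<lambda>\<rho>. indicator (-{-\<rho>..\<rho>}) x * F x = 0) at_top"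
        using eventually_ge_at_top[of "\<bar>x\<bar>"] by eventually_elim (auto simp: indicator_def)
    qed
    show "\<forall>\<^sub>F i in at_top. AE x in lborel. norm (indicator (-{-i..i}) x * F x) \<le> F x"
      by (intro always_eventually allI AE_I2) (auto simp: indicator_def F0)
  qed (use Fi in auto)
  then have "((\<lambda>\<rho>. ennreal (\<integral>s. indicator (-{-\<rho>..\<rho>}) s * F s \<partial>lborel)) \<longlongrightarrow> ennreal 0) at_top"
    by (intro tendsto_ennrealI) simp
  then show ?thesis unfolding eq by simp
qed

text \<open>Moving the window: if [-\<rho>, \<rho>] \<subseteq> [k-r, k+r], the two windowed transforms differ by the
  Fourier integral of h restricted to the difference of the windows, which by Plancherel has
  L2 norm at most 2\<pi> times the tail of |h|^2 outside [-\<rho>, \<rho>].\<close>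
lemma window_fourier_shift_bound:
  assumes hL: "L2_fun h" and \<rho>: "0 \<le> \<rho>" "\<rho> + \<bar>k\<bar> \<le> r"
  shows "(\<integral>\<^sup>+\<eta>. ennreal ((cmod (window_fourier h (k - r) (k + r) \<eta> - window_fourier h (-\<rho>) \<rho> \<eta>))\<^sup>2) \<partial>lborel)
    \<le> ennreal (2*pi) * (\<integral>\<^sup>+s. ennreal (indicator (-{-\<rho>..\<rho>}) s * (cmod (h s))\<^sup>2) \<partial>lborel)"
proof -
  have [measurable]: "h \<in> borel_measurable borel" using hL unfolding L2_fun_def by auto
  define \<phi> where "\<phi> = (\<lambda>s. (indicator {k - r..k + r} s - indicator {-\<rho>..\<rho>} s) *\<^sub>R h s)"
  have [measurable]: "\<phi> \<in> borel_measurable borel" unfolding \<phi>_def by measurable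
  have "\<phi> = (\<lambda>s. indicator {k - r..k + r} s *\<^sub>R h s - indicator {-\<rho>..\<rho>} s *\<^sub>R h s)"
    unfolding \<phi>_def by (simp add: algebra_simps)
  then have "integrable lborel \<phi>"
    using L2_fun_window_integrable[OF hL] by simp
  moreover have "(cmod (\<phi> s))\<^sup>2 \<le> indicator (-{-\<rho>..\<rho>}) s * (cmod (h s))\<^sup>2" for s
    using \<rho> unfolding \<phi>_def by (auto simp: indicator_def)
  ultimately show ?thesis
    unfolding window_fourier_diff[OF hL] \<phi>_def[symmetric]
    by (intro order_trans[OF plancherel_inequality] mult_left_mono nn_integral_mono ennreal_leI) auto
qed

lemma centred_window_error_bound:
  assumes fh: "fourier_L2 h hh" and r: "\<bar>k\<bar> \<le> r"
  defines "\<rho> \<equiv> r - \<bar>k\<bar>"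
  shows "(\<integral>\<^sup>+\<eta>. ennreal ((cmod (hh \<eta> - window_fourier h (k - r) (k + r) \<eta>))\<^sup>2) \<partial>lborel)
    \<le> 2 * (\<integral>\<^sup>+ \<xi>. ennreal ((cmod (hh \<xi> - trunc_fourier h \<rho> \<xi>))\<^sup>2) \<partial>lborel)
      + 2 * (ennreal (2*pi) * (\<integral>\<^sup>+s. ennreal (indicator (-{-\<rho>..\<rho>}) s * (cmod (h s))\<^sup>2) \<partial>lborel))"
proof -
  have hL: "L2_fun h" and hhL: "L2_fun hh" using fh unfolding fourier_L2_def by auto
  have [measurable]: "h \<in> borel_measurable borel" "hh \<in> borel_measurable borel"
    using hL hhL unfolding L2_fun_def by auto
  have \<rho>: "0 \<le> \<rho>" "\<rho> + \<bar>k\<bar> \<le> r" using r unfolding \<rho>_def by auto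
  have "(\<integral>\<^sup>+\<eta>. ennreal ((cmod (hh \<eta> - window_fourier h (k - r) (k + r) \<eta>))\<^sup>2) \<partial>lborel)
     \<le> (\<integral>\<^sup>+\<eta>. 2 * ennreal ((cmod (hh \<eta> - trunc_fourier h \<rho> \<eta>))\<^sup>2)
        + 2 * ennreal ((cmod (window_fourier h (k - r) (k + r) \<eta> - window_fourier h (-\<rho>) \<rho> \<eta>))\<^sup>2) \<partial>lborel)"
  proof (intro nn_integral_mono)
    fix \<eta>
    have "ennreal ((cmod (hh \<eta> - window_fourier h (k - r) (k + r) \<eta>))\<^sup>2)
        \<le> ennreal (2 * (cmod (hh \<eta> - window_fourier h (-\<rho>) \<rho> \<eta>))\<^sup>2
          + 2 * (cmod (window_fourier h (k - r) (k + r) \<eta> - window_fourier h (-\<rho>) \<rho> \<eta>))\<^sup>2)"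
      by (intro ennreal_leI cmod_diff_sq_le)
    then show "ennreal ((cmod (hh \<eta> - window_fourier h (k - r) (k + r) \<eta>))\<^sup>2)
        \<le> 2 * ennreal ((cmod (hh \<eta> - trunc_fourier h \<rho> \<eta>))\<^sup>2)
          + 2 * ennreal ((cmod (window_fourier h (k - r) (k + r) \<eta> - window_fourier h (-\<rho>) \<rho> \<eta>))\<^sup>2)"
      using \<rho> by (simp add: trunc_fourier_eq_window_fourier ennreal_plus ennreal_mult del: ennreal_plus_if)
  qed
  also have "\<dots> = 2 * (\<integral>\<^sup>+ \<xi>. ennreal ((cmod (hh \<xi> - trunc_fourier h \<rho> \<xi>))\<^sup>2) \<partial>lborel)
      + 2 * (\<integral>\<^sup>+\<eta>. ennreal ((cmod (window_fourier h (k - r) (k + r) \<eta>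
        - window_fourier h (-\<rho>) \<rho> \<eta>))\<^sup>2) \<partial>lborel)"
    by (simp add: nn_integral_add nn_integral_cmult)
  also have "\<dots> \<le> 2 * (\<integral>\<^sup>+ \<xi>. ennreal ((cmod (hh \<xi> - trunc_fourier h \<rho> \<xi>))\<^sup>2) \<partial>lborel)
      + 2 * (ennreal (2*pi) * (\<integral>\<^sup>+s. ennreal (indicator (-{-\<rho>..\<rho>}) s * (cmod (h s))\<^sup>2) \<partial>lborel))"
    by (intro add_left_mono mult_left_mono window_fourier_shift_bound[OF hL \<rho>]) simp
  finally show ?thesis .
qed

text \<open>The L2 Fourier transform is also the L2 limit of the Fourier integrals over windows
  [k-r, k+r] centred at an arbitrary point k: both error terms above tend to 0.\<close>
lemma fourier_L2_centred_windows:
  assumes fh: "fourier_L2 h hh"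
  shows "((\<lambda>r. \<integral>\<^sup>+\<eta>. ennreal ((cmod (hh \<eta> - window_fourier h (k - r) (k + r) \<eta>))\<^sup>2) \<partial>lborel)
    \<longlongrightarrow> 0) at_top"
proof -
  have hi: "integrable lborel (\<lambda>t. (cmod (h t))\<^sup>2)" using fh unfolding fourier_L2_def L2_fun_def by auto
  define err where "err = (\<lambda>R. \<integral>\<^sup>+ \<xi>. ennreal ((cmod (hh \<xi> - trunc_fourier h R \<xi>))\<^sup>2) \<partial>lborel)"
  define tail where "tail = (\<lambda>\<rho>. \<integral>\<^sup>+s. ennreal (indicator (-{-\<rho>..\<rho>}) s * (cmod (h s))\<^sup>2) \<partial>lborel)"
  define B where "B = (\<lambda>r. 2 * err (r - \<bar>k\<bar>) + 2 * (ennreal (2*pi) * tail (r - \<bar>k\<bar>)))"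
  have shift: "filterlim (\<lambda>r. r - \<bar>k\<bar>) at_top at_top"
    using filterlim_tendsto_add_at_top[OF tendsto_const[of "-\<bar>k\<bar>"] filterlim_ident] by simp
  have "((\<lambda>r. err (r - \<bar>k\<bar>)) \<longlongrightarrow> 0) at_top"
    using fh unfolding fourier_L2_def err_def by (intro filterlim_compose[OF _ shift]) auto
  moreover have "((\<lambda>r. tail (r - \<bar>k\<bar>)) \<longlongrightarrow> 0) at_top"
    unfolding tail_def by (intro filterlim_compose[OF _ shift] tail_nn_integral_tendsto_zero hi) simp
  ultimately have "(B \<longlongrightarrow> 2 * 0 + 2 * (ennreal (2*pi) * 0)) at_top"
    unfolding B_def by (intro tendsto_add tendsto_mult_ennreal tendsto_const) auto
  then have Blim: "(B \<longlongrightarrow> 0) at_top" by simp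
  have bound: "\<forall>\<^sub>F r in at_top.
      (\<integral>\<^sup>+\<eta>. ennreal ((cmod (hh \<eta> - window_fourier h (k - r) (k + r) \<eta>))\<^sup>2) \<partial>lborel) \<le> B r"
    using eventually_ge_at_top[of "\<bar>k\<bar>"]
    by eventually_elim (unfold B_def err_def tail_def, rule centred_window_error_bound[OF fh])
  show ?thesis by (rule tendsto_sandwich[OF _ bound tendsto_const Blim]) simp
qed

lemma decay_bound_weighted_pointwise:
  fixes hh :: "real \<Rightarrow> complex" and C \<alpha> E :: real and M :: nat and \<eta> :: real
  assumes bnd: "cmod (hh \<eta>) \<le> C * \<bar>\<eta>\<bar> ^ M * (1 + \<bar>\<eta>\<bar>) powr (- \<alpha> - real M)"
    and \<alpha>: "\<alpha> > 0"
  shows "(cmod (hh \<eta>))\<^sup>2 * \<bar>\<eta>\<bar> powr E \<le> C\<^sup>2 * (indicator {-1..1} \<eta> * \<bar>\<eta>\<bar> powr (2 * real M + E)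
      + indicator (-{-1<..<1}) \<eta> * \<bar>\<eta>\<bar> powr (E - 2*\<alpha>))"
proof (cases "\<eta> = 0")
  case True then show ?thesis by (simp add: indicator_def)
next
  case False
  then have p: "\<bar>\<eta>\<bar> > 0" by simp
  define w where "w = (1 + \<bar>\<eta>\<bar>) powr (- 2*\<alpha> - 2*real M)"
  have pw: "\<bar>\<eta>\<bar> ^ M = \<bar>\<eta>\<bar> powr real M" using p by (simp add: powr_realpow)
  have sq_powr: "(x powr a)\<^sup>2 = x powr (2*a)" for x a :: real
    by (simp add: power2_eq_square powr_add[symmetric])
  have "(cmod (hh \<eta>))\<^sup>2 \<le> (C * \<bar>\<eta>\<bar> ^ M * (1 + \<bar>\<eta>\<bar>) powr (- \<alpha> - real M))\<^sup>2"
    using bnd by (intro power_mono) auto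
  also have "\<dots> = C\<^sup>2 * \<bar>\<eta>\<bar> powr (2 * real M) * w"
    unfolding w_def pw power_mult_distrib sq_powr by (simp add: algebra_simps)
  finally have "(cmod (hh \<eta>))\<^sup>2 * \<bar>\<eta>\<bar> powr E \<le> C\<^sup>2 * \<bar>\<eta>\<bar> powr (2 * real M) * w * \<bar>\<eta>\<bar> powr E"
    by (rule mult_right_mono) simp
  also have "\<dots> \<le> C\<^sup>2 * (indicator {-1..1} \<eta> * \<bar>\<eta>\<bar> powr (2 * real M + E)
      + indicator (-{-1<..<1}) \<eta> * \<bar>\<eta>\<bar> powr (E - 2*\<alpha>))"
  proof (cases "\<bar>\<eta>\<bar> \<le> 1")
    case True
    have "w \<le> 1"
      unfolding w_def using powr_mono[of "- 2*\<alpha> - 2*real M" 0 "1 + \<bar>\<eta>\<bar>"] \<alpha> by (simp split: if_splits)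
    then have "C\<^sup>2 * \<bar>\<eta>\<bar> powr (2 * real M) * w * \<bar>\<eta>\<bar> powr E \<le> C\<^sup>2 * \<bar>\<eta>\<bar> powr (2 * real M) * 1 * \<bar>\<eta>\<bar> powr E"
      by (intro mult_right_mono mult_left_mono) auto
    also have "\<dots> = C\<^sup>2 * \<bar>\<eta>\<bar> powr (2 * real M + E)" by (simp add: powr_add mult.assoc)
    also have "\<dots> \<le> C\<^sup>2 * (indicator {-1..1} \<eta> * \<bar>\<eta>\<bar> powr (2 * real M + E)
        + indicator (-{-1<..<1}) \<eta> * \<bar>\<eta>\<bar> powr (E - 2*\<alpha>))"
      using True by (intro mult_left_mono) (auto simp: indicator_def)
    finally show ?thesis .
  next
    case False
    have "w \<le> \<bar>\<eta>\<bar> powr (- 2*\<alpha> - 2*real M)"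
      unfolding w_def using \<alpha> p by (intro powr_mono2') auto
    then have "C\<^sup>2 * \<bar>\<eta>\<bar> powr (2 * real M) * w * \<bar>\<eta>\<bar> powr E
        \<le> C\<^sup>2 * \<bar>\<eta>\<bar> powr (2 * real M) * \<bar>\<eta>\<bar> powr (- 2*\<alpha> - 2*real M) * \<bar>\<eta>\<bar> powr E"
      by (intro mult_right_mono mult_left_mono) auto
    also have "\<dots> = C\<^sup>2 * \<bar>\<eta>\<bar> powr (E - 2*\<alpha>)" by (simp add: powr_add[symmetric] mult.assoc)
    finally have "C\<^sup>2 * \<bar>\<eta>\<bar> powr (2 * real M) * w * \<bar>\<eta>\<bar> powr E \<le> C\<^sup>2 * \<bar>\<eta>\<bar> powr (E - 2*\<alpha>)" .
    moreover have "\<eta> \<notin> {-1..1}" "\<eta> \<in> -{-1<..<1}" using False by auto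
    ultimately show ?thesis by simp
  qed
  finally show ?thesis .
qed

lemma decay_bound_weighted_L2_finite:
  fixes hh :: "real \<Rightarrow> complex" and C \<alpha> E :: real and M :: nat
  assumes bnd: "\<And>x. cmod (hh x) \<le> C * \<bar>x\<bar> ^ M * (1 + \<bar>x\<bar>) powr (- \<alpha> - real M)"
    and \<alpha>: "\<alpha> > 0" and E1: "2 * real M + E > -1" and E2: "E - 2*\<alpha> < -1"
  shows "(\<integral>\<^sup>+\<eta>. ennreal ((cmod (hh \<eta>))\<^sup>2 * \<bar>\<eta>\<bar> powr E) \<partial>lborel) < \<infinity>"
proof -
  have "(\<integral>\<^sup>+\<eta>. ennreal ((cmod (hh \<eta>))\<^sup>2 * \<bar>\<eta>\<bar> powr E) \<partial>lborel)
     \<le> (\<integral>\<^sup>+\<eta>. ennreal (C\<^sup>2) * (indicator {-1..1} \<eta> * ennreal (\<bar>\<eta>\<bar> powr (2 * real M + E))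
      + indicator (-{-1<..<1}) \<eta> * ennreal (\<bar>\<eta>\<bar> powr (E - 2*\<alpha>))) \<partial>lborel)"
  proof (intro nn_integral_mono)
    fix \<eta> :: real
    have "ennreal ((cmod (hh \<eta>))\<^sup>2 * \<bar>\<eta>\<bar> powr E) \<le> ennreal (C\<^sup>2 * (indicator {-1..1} \<eta> * \<bar>\<eta>\<bar> powr (2 * real M + E)
      + indicator (-{-1<..<1}) \<eta> * \<bar>\<eta>\<bar> powr (E - 2*\<alpha>)))"
      by (intro ennreal_leI decay_bound_weighted_pointwise bnd \<alpha>)
    also have "\<dots> = ennreal (C\<^sup>2) * (indicator {-1..1} \<eta> * ennreal (\<bar>\<eta>\<bar> powr (2 * real M + E))
      + indicator (-{-1<..<1}) \<eta> * ennreal (\<bar>\<eta>\<bar> powr (E - 2*\<alpha>)))"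
      by (subst ennreal_mult) (auto simp: ennreal_plus ennreal_indicator_mult indicator_def simp del: ennreal_plus_if)
    finally show "ennreal ((cmod (hh \<eta>))\<^sup>2 * \<bar>\<eta>\<bar> powr E) \<le> \<dots>" .
  qed
  also have "\<dots> = ennreal (C\<^sup>2) * ((\<integral>\<^sup>+\<eta>. indicator {-1..1} \<eta> * ennreal (\<bar>\<eta>\<bar> powr (2 * real M + E)) \<partial>lborel)
      + (\<integral>\<^sup>+\<eta>. indicator (-{-1<..<1}) \<eta> * ennreal (\<bar>\<eta>\<bar> powr (E - 2*\<alpha>)) \<partial>lborel))"
    by (simp add: nn_integral_cmult nn_integral_add)
  also have "\<dots> < \<infinity>"
    using powr_integrable_near_zero[OF E1] powr_integrable_at_infinity[OF E2] by (simp add: ennreal_mult_less_top)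
  finally show ?thesis .
qed

lemma nn_integral_reflect_dilate:
  assumes \<gamma>: "\<gamma> > 0" and [measurable]: "F \<in> borel_measurable borel"
  shows "ennreal \<gamma> * (\<integral>\<^sup>+\<xi>. F (-\<gamma> * \<xi>) \<partial>lborel) = (\<integral>\<^sup>+\<eta>. F \<eta> \<partial>lborel)"
  using nn_integral_real_affine[where f=F and c="-\<gamma>" and t=0] \<gamma> by simp

lemma trunc_fourier_rescaled:
  fixes h :: "real \<Rightarrow> complex" and \<gamma> k R \<xi> :: real
  assumes \<gamma>: "\<gamma> > 0" and R: "R \<ge> 0"
  shows "trunc_fourier (\<lambda>t. complex_of_real (\<gamma> powr (-1/2)) * h (- t / \<gamma> + k)) R \<xi>
    = complex_of_real (sqrt \<gamma>) * exp (- \<i> * complex_of_real (\<gamma> * k * \<xi>))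
      * window_fourier h (k - R/\<gamma>) (k + R/\<gamma>) (-\<gamma>*\<xi>)"
proof -
  define c0 where "c0 = complex_of_real (\<gamma> powr (-1/2)) * exp (- \<i> * complex_of_real (\<gamma> * k * \<xi>))"
  define x where "x = (\<lambda>s. \<gamma>*k + (- \<gamma>) * s)"
  have "trunc_fourier (\<lambda>t. complex_of_real (\<gamma> powr (-1/2)) * h (- t / \<gamma> + k)) R \<xi>
     = (\<integral>t. indicator {-R..R} t *\<^sub>R (complex_of_real (\<gamma> powr (-1/2)) * h (- t / \<gamma> + k)
          * exp (- \<i> * complex_of_real (t*\<xi>))) \<partial>lborel)"
    by (simp add: trunc_fourier_eq_window_fourier[OF R] window_fourier_altdef mult.assoc)
  also have "\<dots> = \<bar>-\<gamma>\<bar> *\<^sub>R (\<integral>s. indicator {-R..R} (x s) *\<^sub>R (complex_of_real (\<gamma> powr (-1/2))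
          * h (- x s / \<gamma> + k) * exp (- \<i> * complex_of_real (x s * \<xi>))) \<partial>lborel)"
    unfolding x_def by (rule lborel_integral_real_affine) (use \<gamma> in simp)
  also have "(\<lambda>s. indicator {-R..R} (x s) *\<^sub>R (complex_of_real (\<gamma> powr (-1/2)) * h (- x s / \<gamma> + k)
          * exp (- \<i> * complex_of_real (x s * \<xi>))))
     = (\<lambda>s. c0 * (indicator {k - R/\<gamma>..k + R/\<gamma>} s *\<^sub>R (h s * exp (- \<i> * complex_of_real (s * (-\<gamma>*\<xi>))))))"
  proof
    fix s
    have "(x s \<in> {-R..R}) = (s \<in> {k - R/\<gamma>..k + R/\<gamma>})"
      using \<gamma> unfolding x_def by (auto simp: field_simps)
    then have i: "indicator {-R..R} (x s) = (indicator {k - R/\<gamma>..k + R/\<gamma>} s :: real)"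
      by (simp add: indicator_def)
    have a: "- x s / \<gamma> + k = s" using \<gamma> unfolding x_def by (simp add: field_simps)
    have e: "exp (- \<i> * complex_of_real (x s * \<xi>))
        = exp (- \<i> * complex_of_real (\<gamma> * k * \<xi>)) * exp (- \<i> * complex_of_real (s * (-\<gamma>*\<xi>)))"
      unfolding x_def by (simp add: exp_add[symmetric] algebra_simps)
    show "indicator {-R..R} (x s) *\<^sub>R (complex_of_real (\<gamma> powr (-1/2)) * h (- x s / \<gamma> + k)
          * exp (- \<i> * complex_of_real (x s * \<xi>)))
        = c0 * (indicator {k - R/\<gamma>..k + R/\<gamma>} s *\<^sub>R (h s * exp (- \<i> * complex_of_real (s * (-\<gamma>*\<xi>)))))"
      unfolding i a e c0_def by (simp add: scaleR_conv_of_real mult_ac)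
  qed
  also have "\<bar>-\<gamma>\<bar> *\<^sub>R (\<integral>s. c0 * (indicator {k - R/\<gamma>..k + R/\<gamma>} s *\<^sub>R (h s
          * exp (- \<i> * complex_of_real (s * (-\<gamma>*\<xi>))))) \<partial>lborel)
     = complex_of_real (\<gamma> * \<gamma> powr (-1/2)) * exp (- \<i> * complex_of_real (\<gamma> * k * \<xi>))
       * window_fourier h (k - R/\<gamma>) (k + R/\<gamma>) (-\<gamma>*\<xi>)"
    unfolding integral_mult_right_zero c0_def window_fourier_altdef
    using \<gamma> by (simp add: scaleR_conv_of_real mult_ac)
  also have "\<gamma> * \<gamma> powr (-1/2) = sqrt \<gamma>"
    using \<gamma> by (simp add: powr_half_sqrt[symmetric] powr_add[symmetric] powr_mult_base)
  finally show ?thesis .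
qed

lemma L2_fun_rescaled:
  assumes hL: "L2_fun h" and \<gamma>: "\<gamma> \<noteq> 0"
    and [measurable]: "c \<in> borel_measurable borel" and c: "\<And>t. cmod (c t) = a"
  shows "L2_fun (\<lambda>t. c t * h (\<gamma> * t + k))"
proof -
  have [measurable]: "h \<in> borel_measurable borel" and hi: "integrable lborel (\<lambda>t. (cmod (h t))\<^sup>2)"
    using hL unfolding L2_fun_def by auto
  have "integrable lborel (\<lambda>t. a\<^sup>2 * (cmod (h (k + \<gamma> * t)))\<^sup>2)"
    using lborel_integrable_real_affine[OF hi, of \<gamma> k] \<gamma> by simp
  then show ?thesis
    unfolding L2_fun_def by (simp add: norm_mult power_mult_distrib c add.commute)
qed

text \<open>The truncation
  error at R equals the error of the windows centred at k of radius R/\<gamma>.\<close>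
lemma fourier_L2_rescaled:
  assumes fh: "fourier_L2 h hh" and \<gamma>: "\<gamma> > 0"
  shows "fourier_L2 (\<lambda>t. complex_of_real (\<gamma> powr (-1/2)) * h (- t / \<gamma> + k))
    (\<lambda>\<xi>. complex_of_real (sqrt \<gamma>) * exp (- \<i> * complex_of_real (\<gamma> * k * \<xi>)) * hh (-\<gamma> * \<xi>))"
    (is "fourier_L2 ?\<theta> ?g")
proof -
  have hL: "L2_fun h" and hhL: "L2_fun hh" using fh unfolding fourier_L2_def by auto
  have [measurable]: "h \<in> borel_measurable borel" "hh \<in> borel_measurable borel"
    using hL hhL unfolding L2_fun_def by auto
  have "L2_fun (\<lambda>t. complex_of_real (\<gamma> powr (-1/2)) * h ((-1/\<gamma>) * t + k))"
    using \<gamma> by (intro L2_fun_rescaled[OF hL]) auto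
  then have \<theta>L: "L2_fun ?\<theta>" by simp
  have "L2_fun (\<lambda>\<xi>. complex_of_real (sqrt \<gamma>) * exp (- \<i> * complex_of_real (\<gamma> * k * \<xi>)) * hh ((-\<gamma>) * \<xi> + 0))"
    using \<gamma> by (intro L2_fun_rescaled[OF hhL]) (auto simp: norm_mult)
  then have gL: "L2_fun ?g" by simp
  define Q where "Q = (\<lambda>r. \<integral>\<^sup>+\<eta>. ennreal ((cmod (hh \<eta> - window_fourier h (k - r) (k + r) \<eta>))\<^sup>2) \<partial>lborel)"
  have err: "(\<integral>\<^sup>+ \<xi>. ennreal ((cmod (?g \<xi> - trunc_fourier ?\<theta> R \<xi>))\<^sup>2) \<partial>lborel) = Q (R/\<gamma>)"
    if R: "R \<ge> 0" for R
  proof -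
    define D where "D = (\<lambda>\<eta>. ennreal ((cmod (hh \<eta> - window_fourier h (k - R/\<gamma>) (k + R/\<gamma>) \<eta>))\<^sup>2))"
    have [measurable]: "D \<in> borel_measurable borel" unfolding D_def by measurable
    have "ennreal ((cmod (?g \<xi> - trunc_fourier ?\<theta> R \<xi>))\<^sup>2) = ennreal \<gamma> * D (-\<gamma> * \<xi>)" for \<xi>
    proof -
      have "?g \<xi> - trunc_fourier ?\<theta> R \<xi> = complex_of_real (sqrt \<gamma>) * exp (- \<i> * complex_of_real (\<gamma> * k * \<xi>))
          * (hh (-\<gamma> * \<xi>) - window_fourier h (k - R/\<gamma>) (k + R/\<gamma>) (-\<gamma>*\<xi>))"
        unfolding trunc_fourier_rescaled[OF \<gamma> R] by (simp add: algebra_simps)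
      then show ?thesis unfolding D_def using \<gamma> by (simp add: norm_mult power_mult_distrib ennreal_mult)
    qed
    then have "(\<integral>\<^sup>+ \<xi>. ennreal ((cmod (?g \<xi> - trunc_fourier ?\<theta> R \<xi>))\<^sup>2) \<partial>lborel)
        = ennreal \<gamma> * (\<integral>\<^sup>+ \<xi>. D (-\<gamma> * \<xi>) \<partial>lborel)"
      by (simp add: nn_integral_cmult)
    also have "\<dots> = (\<integral>\<^sup>+ \<eta>. D \<eta> \<partial>lborel)"
      by (rule nn_integral_reflect_dilate[OF \<gamma>]) measurable
    also have "\<dots> = Q (R/\<gamma>)" unfolding D_def Q_def ..
    finally show ?thesis .
  qed
  have "filterlim (\<lambda>R. R / \<gamma>) at_top at_top"
    using filterlim_tendsto_pos_mult_at_top[OF tendsto_const[of "1/\<gamma>"] _ filterlim_ident] \<gamma>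
    by (simp add: divide_inverse mult.commute)
  then have "((\<lambda>R. Q (R/\<gamma>)) \<longlongrightarrow> 0) at_top"
    unfolding Q_def by (rule filterlim_compose[OF fourier_L2_centred_windows[OF fh]])
  moreover have "eventually (\<lambda>R. Q (R/\<gamma>) = (\<integral>\<^sup>+ \<xi>. ennreal ((cmod (?g \<xi> - trunc_fourier ?\<theta> R \<xi>))\<^sup>2) \<partial>lborel)) at_top"
    using eventually_ge_at_top[of 0] by eventually_elim (rule err[symmetric])
  ultimately show ?thesis
    unfolding fourier_L2_def using \<theta>L gL by (auto intro: Lim_transform_eventually)
qed

lemma weighted_L2_rescaled:
  assumes \<gamma>: "\<gamma> > 0" and [measurable]: "hh \<in> borel_measurable borel"
  shows "(\<integral>\<^sup>+\<xi>. ennreal ((cmod (complex_of_real (sqrt \<gamma>) * exp (- \<i> * complex_of_real (\<gamma> * k * \<xi>))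
        * hh (-\<gamma> * \<xi>)))\<^sup>2 * \<bar>\<xi>\<bar> powr E) \<partial>lborel)
    = ennreal (\<gamma> powr (-E)) * (\<integral>\<^sup>+\<eta>. ennreal ((cmod (hh \<eta>))\<^sup>2 * \<bar>\<eta>\<bar> powr E) \<partial>lborel)"
proof -
  define F where "F = (\<lambda>\<eta>. ennreal ((cmod (hh \<eta>))\<^sup>2 * \<bar>\<eta>\<bar> powr E))"
  have [measurable]: "F \<in> borel_measurable borel" unfolding F_def by measurable
  have "ennreal ((cmod (complex_of_real (sqrt \<gamma>) * exp (- \<i> * complex_of_real (\<gamma> * k * \<xi>))
        * hh (-\<gamma> * \<xi>)))\<^sup>2 * \<bar>\<xi>\<bar> powr E) = ennreal (\<gamma> powr (-E)) * (ennreal \<gamma> * F (-\<gamma> * \<xi>))" for \<xi>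
  proof -
    have "\<bar>-\<gamma> * \<xi>\<bar> powr E = \<gamma> powr E * \<bar>\<xi>\<bar> powr E" using \<gamma> by (simp add: abs_mult powr_mult)
    moreover have "\<gamma> powr (-E) * \<gamma> powr E = 1" using \<gamma> by (simp add: powr_add[symmetric])
    ultimately have "(cmod (complex_of_real (sqrt \<gamma>) * exp (- \<i> * complex_of_real (\<gamma> * k * \<xi>))
        * hh (-\<gamma> * \<xi>)))\<^sup>2 * \<bar>\<xi>\<bar> powr E
        = \<gamma> powr (-E) * (\<gamma> * ((cmod (hh (-\<gamma> * \<xi>)))\<^sup>2 * \<bar>-\<gamma> * \<xi>\<bar> powr E))"
      using \<gamma> by (simp add: norm_mult power_mult_distrib algebra_simps)
    then show ?thesis unfolding F_def using \<gamma> by (simp add: ennreal_mult)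
  qed
  moreover have "ennreal \<gamma> * (\<integral>\<^sup>+\<xi>. F (- (\<gamma> * \<xi>)) \<partial>lborel) = (\<integral>\<^sup>+\<eta>. F \<eta> \<partial>lborel)"
    using nn_integral_reflect_dilate[OF \<gamma>, of F] by simp
  ultimately show ?thesis by (simp add: nn_integral_cmult F_def[symmetric])
qed

text \<open>Its L2 transform is the rescaled hh, and the decay bound makes the weighted norm
  finite, because 2M + E > -1 (using K \<le> M and q(1-2d) > 0) and E - 2\<alpha> < -1 (using
  q(1-2d) < 1 and \<alpha> > 1/2), where E = q - 1 - 2dq - 2K.\<close>
lemma S_class_rescaled_filter:
  assumes \<gamma>: "\<gamma> > 0" and KM: "K \<le> M" and \<alpha>: "\<alpha> > 1/2" and d: "0 < d" "d < 1/2"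
    and q: "1 \<le> q" "real q < 1 / (1 - 2*d)"
    and decay: "\<forall>x. cmod (hh x) \<le> C * \<bar>x\<bar> ^ M * (1 + \<bar>x\<bar>) powr (- \<alpha> - real M)"
    and fh: "fourier_L2 h hh"
  shows "S_class K q d (\<lambda>t. complex_of_real (\<gamma> powr (-1/2)) * h (- t / \<gamma> + k))"
proof -
  have hh[measurable]: "hh \<in> borel_measurable borel" using fh unfolding fourier_L2_def L2_fun_def by auto
  define E where "E = real q - 1 - 2 * d * real q - 2 * real K"
  have "real q * (1 - 2*d) < 1" "real q * (1 - 2*d) > 0" using q d by (simp_all add: field_simps)
  then have "2 * real M + E > -1" "E - 2*\<alpha> < -1" unfolding E_def using KM \<alpha> by (simp_all add: algebra_simps)
  then have "(\<integral>\<^sup>+\<eta>. ennreal ((cmod (hh \<eta>))\<^sup>2 * \<bar>\<eta>\<bar> powr E) \<partial>lborel) < \<infinity>"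
    using decay \<alpha> by (intro decay_bound_weighted_L2_finite) auto
  then have "(\<integral>\<^sup>+\<xi>. ennreal ((cmod (complex_of_real (sqrt \<gamma>) * exp (- \<i> * complex_of_real (\<gamma> * k * \<xi>))
        * hh (-\<gamma> * \<xi>)))\<^sup>2 * \<bar>\<xi>\<bar> powr E) \<partial>lborel) < \<infinity>"
    unfolding weighted_L2_rescaled[OF \<gamma> hh] by (simp add: ennreal_mult_less_top)
  with fourier_L2_rescaled[OF fh \<gamma>, of k] show ?thesis
    unfolding S_class_def E_def fourier_L2_def by blast
qed

theorem mainTheorem3:
  fixes d :: real and q K :: nat
  assumes "0 < d" and "d < 1/2" and "1 \<le> q" and "real q < 1 / (1 - 2 * d)"
  shows "(\<forall>\<theta> g. S_class K q d \<theta> \<longrightarrow> fourier_L2 \<theta> g \<longrightarrow> qfold_integral K q d g < \<infinity>) \<and>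
    (\<forall>(M::nat) (\<alpha>::real) (C::real) (h_inf::real \<Rightarrow> complex) (h_inf_hat::real \<Rightarrow> complex)
        (\<gamma>::int \<Rightarrow> real).
      K \<le> M \<longrightarrow> \<alpha> > 1/2 \<longrightarrow> C > 0 \<longrightarrow>
      (\<forall>x. cmod (h_inf_hat x) \<le> C * \<bar>x\<bar> ^ M * (1 + \<bar>x\<bar>) powr (- \<alpha> - real M)) \<longrightarrow>
      fourier_L2 h_inf h_inf_hat \<longrightarrow>
      (\<forall>m. \<gamma> m > 0) \<longrightarrow>
      (\<forall>m k. S_class K q d (h_mk h_inf \<gamma> m k)))"
proof (intro conjI allI impI)
  fix \<theta> g assume "S_class K q d \<theta>" "fourier_L2 \<theta> g"
  then show "qfold_integral K q d g < \<infinity>" using qfold_integral_finite assms by blast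
next
  fix M :: nat and \<alpha> C :: real and h_inf h_inf_hat :: "real \<Rightarrow> complex" and \<gamma> :: "int \<Rightarrow> real"
    and m k :: int
  assume "K \<le> M" "\<alpha> > 1/2" "C > 0" "fourier_L2 h_inf h_inf_hat" "\<forall>m. \<gamma> m > 0"
    and "\<forall>x. cmod (h_inf_hat x) \<le> C * \<bar>x\<bar> ^ M * (1 + \<bar>x\<bar>) powr (- \<alpha> - real M)"
  moreover have "h_mk h_inf \<gamma> m k = (\<lambda>t. complex_of_real (\<gamma> m powr (-1/2)) * h_inf (- t / \<gamma> m + real_of_int k))"
    by (rule ext) (simp add: h_mk_def)
  ultimately show "S_class K q d (h_mk h_inf \<gamma> m k)"
    using S_class_rescaled_filter assms by simp
qed

end
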